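(* Let $\Gamma_1$ be an $n\times n$ matrix and $\Gamma_2=BB^T$ for an $n\times k$ matrix $B$ such that $(\Gamma_1^T,B)$ is controllable, i.e. $\mathrm{span}$ of the columns of $B,\Gamma_1^TB,\dots,(\Gamma_1^T)^mB$ is $\mathbb R^n$ for some $m\ge0$. Let $R(t)$, $t\ge0$, be a smooth family of symmetric $n\times n$ matrices. Then the Cauchy problem $$\dot V=-\Gamma_1V-V\Gamma_1^T-R(t)-V\Gamma_2V,\qquad \lim_{t\to0^+}V^{-1}=0$$ is well posed: there exists a solution which is invertible for small $t>0$ with $V(t)^{-1}\to0$ as $t\to0^+$, and it is unique on some maximal interval of definition $I\subseteq(0,+\infty)$. Moreover $V(t)>0$ for small $t>0$.
   Context: $V(t)>0$ means positive definite. *)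

theory Defs
  imports "HOL-Analysis.Analysis"
begin

primrec matpow :: "real^'n^'n \<Rightarrow> nat \<Rightarrow> real^'n^'n" where
  "matpow A 0 = mat 1"
| "matpow A (Suc j) = A ** matpow A j"

definition controllable :: "real^'n^'n \<Rightarrow> real^'k^'n \<Rightarrow> bool" where
  "controllable A B \<longleftrightarrow>
     (\<exists>m::nat. span (\<Union>j\<in>{0..m}. columns (matpow A j ** B)) = UNIV)"

definition smooth_on_nonneg :: "(real \<Rightarrow> 'a::real_normed_vector) \<Rightarrow> bool" where
  "smooth_on_nonneg f \<longleftrightarrow>
     (\<exists>D :: nat \<Rightarrow> real \<Rightarrow> 'a. D 0 = f \<and>
        (\<forall>k. \<forall>t\<ge>0. (D k has_vector_derivative D (Suc k) t) (at t within {0..})))"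

definition symmetric_mat :: "real^'n^'n \<Rightarrow> bool" where
  "symmetric_mat A \<longleftrightarrow> transpose A = A"

definition pos_def :: "real^'n^'n \<Rightarrow> bool" where
  "pos_def A \<longleftrightarrow> symmetric_mat A \<and> (\<forall>x. x \<noteq> 0 \<longrightarrow> x \<bullet> (A *v x) > 0)"

definition riccati_sol ::
  "real^'n^'n \<Rightarrow> real^'n^'n \<Rightarrow> (real \<Rightarrow> real^'n^'n) \<Rightarrow> real set \<Rightarrow> (real \<Rightarrow> real^'n^'n) \<Rightarrow> bool" where
  "riccati_sol G1 G2 R I V \<longleftrightarrow>
     (\<forall>t\<in>I. (V has_vector_derivative
        (- (G1 ** V t) - (V t ** transpose G1) - R t - (V t ** G2 ** V t))) (at t))"

definition inv_to_zero :: "(real \<Rightarrow> real^'n^'n) \<Rightarrow> bool" where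
  "inv_to_zero V \<longleftrightarrow>
     (\<exists>\<delta>>0. \<forall>t. 0 < t \<and> t < \<delta> \<longrightarrow> invertible (V t)) \<and>
     ((\<lambda>t. matrix_inv (V t)) \<longlongrightarrow> 0) (at_right 0)"

definition ival :: "ereal \<Rightarrow> real set" where
  "ival T = {t. 0 < t \<and> ereal t < T}"

end

theory Submission
  imports Defs
begin

text \<open>The substitution \<open>U = V\<^sup>-\<^sup>1\<close> turns the singular Cauchy problem into the regular one
  \<open>U' = B B\<^sup>T + U G1 + G1\<^sup>T U + U R U\<close>, \<open>U(0) = 0\<close>, which has a unique local
  solution by Picard iteration and Gronwall's inequality; by uniqueness \<open>U\<close> is symmetric.
  If \<open>P' = -(G1 + R U / 2) P\<close>, the congruence \<open>P\<^sup>T U P\<close> has derivative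
  \<open>P\<^sup>T B B\<^sup>T P \<ge> 0\<close>, so \<open>U \<ge> 0\<close> near \<open>0\<close>. If \<open>Q' = -G1 Q\<close>, then
  \<open>q = (Q x)\<^sup>T U (Q x)\<close> satisfies \<open>q' \<ge> |B\<^sup>T Q x|\<^sup>2 - K q\<close>, so \<open>q(t) = 0\<close> for some small
  \<open>t > 0\<close> forces \<open>B\<^sup>T Q x = 0\<close> on \<open>(0, t)\<close>; differentiating repeatedly gives
  \<open>B\<^sup>T G1\<^sup>j x = 0\<close> for all \<open>j\<close>, and controllability yields \<open>x = 0\<close>. Thus \<open>U > 0\<close> and
  \<open>V = U\<^sup>-\<^sup>1 > 0\<close> for small \<open>t > 0\<close>. Conversely the inverse of any solution, extended by \<open>0\<close>,
  solves the regular problem, so two solutions agree near \<open>0\<close>, and then wherever both are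
  defined by uniqueness for the Riccati equation itself. Gluing all solutions gives the maximal one.\<close>

section \<open>Matrix algebra\<close>

lemma bounded_bilinear_matrix_matrix_mult:
  "bounded_bilinear ((**) :: real^'n^'m \<Rightarrow> real^'p^'n \<Rightarrow> real^'p^'m)"
proof -
  have "bilinear ((**) :: real^'n^'m \<Rightarrow> real^'p^'n \<Rightarrow> real^'p^'m)"
    unfolding bilinear_def linear_iff
    by (auto simp: matrix_add_ldistrib matrix_scalar_ac scalar_matrix_assoc[symmetric])
       (vector matrix_matrix_mult_def sum.distrib[symmetric] field_simps)
  then show ?thesis by (rule bilinear_conv_bounded_bilinear[THEN iffD1])
qed

lemma bounded_bilinear_matrix_vector_mult:
  "bounded_bilinear ((*v) :: real^'n^'m \<Rightarrow> real^'n \<Rightarrow> real^'m)"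
proof -
  have "bilinear ((*v) :: real^'n^'m \<Rightarrow> real^'n \<Rightarrow> real^'m)"
    unfolding bilinear_def linear_iff
    by (auto simp: matrix_vector_right_distrib matrix_vector_mult_add_rdistrib
        matrix_vector_mult_scaleR) (vector matrix_vector_mult_def sum_distrib_left field_simps)
  then show ?thesis by (rule bilinear_conv_bounded_bilinear[THEN iffD1])
qed

lemma bounded_linear_transpose: "bounded_linear (transpose :: real^'n^'m \<Rightarrow> real^'m^'n)"
  unfolding linear_conv_bounded_linear[symmetric] linear_iff
  by (auto simp: transpose_def vec_eq_iff)

lemmas matrix_mult_distrib =
  bounded_bilinear.add_left[OF bounded_bilinear_matrix_matrix_mult]
  bounded_bilinear.add_right[OF bounded_bilinear_matrix_matrix_mult]
  bounded_bilinear.diff_left[OF bounded_bilinear_matrix_matrix_mult]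
  bounded_bilinear.diff_right[OF bounded_bilinear_matrix_matrix_mult]
  bounded_bilinear.minus_left[OF bounded_bilinear_matrix_matrix_mult]
  bounded_bilinear.minus_right[OF bounded_bilinear_matrix_matrix_mult]

lemmas matrix_mult_scaleR =
  bounded_bilinear.scaleR_left[OF bounded_bilinear_matrix_matrix_mult]
  bounded_bilinear.scaleR_right[OF bounded_bilinear_matrix_matrix_mult]

lemma transpose_zero [simp]: "transpose 0 = (0::real^'n^'m)"
  by (simp add: transpose_def vec_eq_iff)

lemma transpose_add: "transpose (A + B) = transpose A + transpose (B::real^'n^'m)"
  by (simp add: transpose_def vec_eq_iff)

lemma transpose_diff: "transpose (A - B) = transpose A - transpose (B::real^'n^'m)"
  by (simp add: transpose_def vec_eq_iff)

lemma transpose_uminus: "transpose (- A) = - transpose (A::real^'n^'m)"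
  by (simp add: transpose_def vec_eq_iff)

lemmas transpose_simps =
  transpose_add transpose_diff transpose_uminus transpose_scalar matrix_transpose_mul

lemma norm_vec_power2: "norm (x::'a::real_normed_vector^'n) ^ 2 = (\<Sum>i\<in>UNIV. norm (x$i) ^ 2)"
  unfolding norm_vec_def L2_set_def by (simp add: sum_nonneg)

lemma norm_matrix_vector_mult_le: "norm ((A::real^'n^'m) *v x) \<le> norm A * norm x"
proof -
  have "norm (A *v x) ^ 2 = (\<Sum>i\<in>UNIV. ((A$i) \<bullet> x) ^ 2)"
    by (simp add: norm_vec_power2 matrix_vector_mul_component)
  also have "\<dots> \<le> (\<Sum>i\<in>UNIV. (norm (A$i) * norm x) ^ 2)"
    by (intro sum_mono) (metis Cauchy_Schwarz_ineq2 abs_ge_zero power2_abs power_mono)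
  also have "\<dots> = (norm A * norm x) ^ 2"
    by (simp add: power_mult_distrib norm_vec_power2[of A] sum_distrib_right)
  finally show ?thesis
    by (rule power2_le_imp_le) simp
qed

lemma norm_transpose: "norm (transpose A) = norm (A::real^'n^'m)"
proof -
  have "transpose A \<bullet> transpose A = A \<bullet> A"
    unfolding inner_vec_def transpose_def by (simp, rule sum.swap)
  then show ?thesis by (simp add: norm_eq_sqrt_inner)
qed

lemma norm_matrix_mult_le: "norm ((A::real^'n^'m) ** B) \<le> norm A * norm B"
proof -
  have row: "(A ** B) $ i = transpose B *v (A $ i)" for i
    by (simp add: matrix_matrix_mult_def matrix_vector_mult_def transpose_def vec_eq_iff
        mult.commute[of "A$i$k" for k])
  have "norm (A ** B) ^ 2 = (\<Sum>i\<in>UNIV. norm (transpose B *v (A$i)) ^ 2)"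
    by (simp add: norm_vec_power2 row)
  also have "\<dots> \<le> (\<Sum>i\<in>UNIV. (norm B * norm (A$i)) ^ 2)"
    by (intro sum_mono) (metis norm_matrix_vector_mult_le norm_transpose norm_ge_zero power_mono)
  also have "\<dots> = (norm A * norm B) ^ 2"
    by (simp add: power_mult_distrib norm_vec_power2[of A] sum_distrib_left mult.commute)
  finally show ?thesis
    by (rule power2_le_imp_le) simp
qed

lemma norm_matrix_mult3_le: "norm ((A::real^'n^'m) ** B ** C) \<le> norm A * norm B * norm C"
  by (meson norm_matrix_mult_le norm_ge_zero mult_right_mono order_trans)

lemma matrix_inv_right: "invertible A \<Longrightarrow> A ** matrix_inv A = mat 1"
  and matrix_inv_left: "invertible A \<Longrightarrow> matrix_inv A ** A = mat 1"
  for A :: "real^'n^'n"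
proof -
  assume "invertible A"
  then have "A ** matrix_inv A = mat 1 \<and> matrix_inv A ** A = mat 1"
    unfolding matrix_inv_def invertible_def by (rule someI_ex)
  then show "A ** matrix_inv A = mat 1" "matrix_inv A ** A = mat 1" by auto
qed

lemma matrix_inv_unique:
  fixes A X :: "real^'n^'n"
  assumes "A ** X = mat 1"
  shows "invertible A" and "matrix_inv A = X"
proof -
  show inv: "invertible A" using assms invertible_right_inverse by blast
  have "matrix_inv A = matrix_inv A ** (A ** X)" using assms by simp
  also have "\<dots> = X" by (simp add: matrix_mul_assoc matrix_inv_left[OF inv])
  finally show "matrix_inv A = X" .
qed

lemma matrix_inv_matrix_inv:
  fixes A :: "real^'n^'n"
  shows "invertible A \<Longrightarrow> matrix_inv (matrix_inv A) = A"
  using matrix_inv_unique(2)[OF matrix_inv_left] by auto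

lemma transpose_matrix_inv:
  fixes A :: "real^'n^'n"
  assumes "invertible A"
  shows "transpose (matrix_inv A) = matrix_inv (transpose A)"
proof -
  have "transpose A ** transpose (matrix_inv A) = mat 1"
    using matrix_inv_left[OF assms] by (metis matrix_transpose_mul transpose_mat)
  then show ?thesis using matrix_inv_unique by metis
qed

lemma invertible_if_norm_diff_mat_1_less:
  fixes X :: "real^'n^'n"
  assumes "norm (X - mat 1) < 1"
  shows "invertible X"
proof -
  have "y = 0" if "X *v y = 0" for y
  proof -
    have "(mat 1 - X) *v y = y" using that by (simp add: matrix_vector_mult_diff_rdistrib)
    then have "norm y \<le> norm (mat 1 - X) * norm y" by (metis norm_matrix_vector_mult_le)
    with assms show "y = 0" by (simp add: norm_minus_commute mult_le_cancel_right1)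
  qed
  then have "inj ((*v) X)"
    by (intro injI) (metis eq_iff_diff_eq_0 matrix_vector_mult_diff_distrib)
  then show ?thesis using matrix_left_invertible_injective invertible_left_inverse by blast
qed

lemma eventually_invertible:
  fixes W :: "'a \<Rightarrow> real^'n^'n"
  assumes lim: "(W \<longlongrightarrow> A) F" and inv: "invertible A"
  shows "\<forall>\<^sub>F s in F. invertible (W s)"
proof -
  define c where "c = norm (matrix_inv A)"
  have c: "c \<ge> 0" by (simp add: c_def)
  have "\<forall>\<^sub>F s in F. norm (W s - A) < 1 / (c + 1)"
    using lim[unfolded tendsto_iff, rule_format, of "1 / (c + 1)"] c
    by (simp add: dist_norm)
  then show ?thesis
  proof eventually_elim
    case (elim s)
    have "norm (matrix_inv A ** W s - mat 1) = norm (matrix_inv A ** (W s - A))"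
      by (simp add: matrix_mult_distrib matrix_inv_left[OF inv])
    also have "\<dots> \<le> c * norm (W s - A)" unfolding c_def by (rule norm_matrix_mult_le)
    also have "\<dots> \<le> (c + 1) * norm (W s - A)" by (simp add: distrib_right)
    also have "\<dots> < 1" using elim c by (simp add: field_simps)
    finally obtain X where "X ** (matrix_inv A ** W s) = mat 1"
      using invertible_if_norm_diff_mat_1_less invertible_left_inverse by blast
    then show "invertible (W s)"
      by (metis invertible_left_inverse matrix_mul_assoc)
  qed
qed

lemma matrix_inv_diff:
  fixes A B :: "real^'n^'n"
  assumes "invertible A" "invertible B"
  shows "matrix_inv A - matrix_inv B = - (matrix_inv A ** (A - B) ** matrix_inv B)"
proof -
  have "matrix_inv A ** A ** X = X" "X ** B ** matrix_inv B = X" for X :: "real^'n^'n"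
    by (simp_all add: matrix_inv_left[OF assms(1)] matrix_mul_assoc[symmetric]
        matrix_inv_right[OF assms(2)])
  then show ?thesis by (simp add: matrix_mult_distrib)
qed

lemma tendsto_matrix_inv:
  fixes W :: "'a \<Rightarrow> real^'n^'n"
  assumes lim: "(W \<longlongrightarrow> A) F" and inv: "invertible A"
  shows "((\<lambda>s. matrix_inv (W s)) \<longlongrightarrow> matrix_inv A) F"
proof -
  define c where "c = norm (matrix_inv A)"
  have c: "c \<ge> 0" by (simp add: c_def)
  have "\<forall>\<^sub>F s in F. norm (W s - A) < 1 / (2 * c + 2)"
    using lim[unfolded tendsto_iff, rule_format, of "1 / (2 * c + 2)"] c by (simp add: dist_norm)
  then have "\<forall>\<^sub>F s in F. norm (W s - A) * c \<le> 1 / 2"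
  proof eventually_elim
    case (elim s)
    then have "norm (W s - A) * c * 2 + norm (W s - A) * 2 < 1"
      using c by (simp add: less_divide_eq algebra_simps)
    then show ?case using norm_ge_zero[of "W s - A"] by linarith
  qed
  then have "\<forall>\<^sub>F s in F. norm (matrix_inv (W s) - matrix_inv A) \<le> (2 * c * c) * norm (W s - A)"
    using eventually_invertible[OF lim inv]
  proof eventually_elim
    case (elim s)
    have diff: "norm (matrix_inv (W s) - matrix_inv A) \<le> norm (matrix_inv (W s)) * (norm (W s - A) * c)"
      using norm_matrix_mult3_le[of "matrix_inv (W s)" "W s - A" "matrix_inv A"]
      by (simp add: matrix_inv_diff[OF elim(2) inv] c_def mult.assoc)
    have "norm (matrix_inv (W s)) \<le> c + norm (matrix_inv (W s) - matrix_inv A)"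
      by (simp add: c_def norm_triangle_sub)
    also have "\<dots> \<le> c + norm (matrix_inv (W s)) * (norm (W s - A) * c)"
      using diff by simp
    also have "\<dots> \<le> c + norm (matrix_inv (W s)) * (1 / 2)"
      by (intro add_left_mono mult_left_mono elim(1)) simp
    finally have "norm (matrix_inv (W s)) \<le> 2 * c" by simp
    then have "norm (matrix_inv (W s) - matrix_inv A) \<le> (2 * c) * (norm (W s - A) * c)"
      by (rule order_trans[OF diff mult_right_mono]) (simp add: c)
    then show ?case by (simp add: algebra_simps)
  qed
  moreover have "((\<lambda>s. (2 * c * c) * norm (W s - A)) \<longlongrightarrow> 0) F"
    using tendsto_mult_right_zero[OF tendsto_norm_zero[OF Lim_null[THEN iffD1, OF lim]]] .
  ultimately have "((\<lambda>s. matrix_inv (W s) - matrix_inv A) \<longlongrightarrow> 0) F"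
    by (rule Lim_null_comparison)
  then show ?thesis by (simp add: Lim_null[symmetric])
qed

lemma has_vector_derivative_iff_tendsto_quotient:
  fixes f :: "real \<Rightarrow> 'a::real_normed_vector"
  shows "(f has_vector_derivative D) (at t) \<longleftrightarrow> ((\<lambda>s. (f s - f t) /\<^sub>R (s - t)) \<longlongrightarrow> D) (at t)"
proof -
  have "\<forall>\<^sub>F s in at t. norm (((f s - f t) - (s - t) *\<^sub>R D) /\<^sub>R norm (s - t))
                      = norm ((f s - f t) /\<^sub>R (s - t) - D)"
  proof (rule eventually_at_filter[THEN iffD2, OF always_eventually], intro allI impI)
    fix s assume "s \<noteq> t"
    then have "(f s - f t) /\<^sub>R (s - t) - D = ((f s - f t) - (s - t) *\<^sub>R D) /\<^sub>R (s - t)"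
      by (simp add: scaleR_diff_right)
    then show "norm (((f s - f t) - (s - t) *\<^sub>R D) /\<^sub>R norm (s - t)) = norm ((f s - f t) /\<^sub>R (s - t) - D)"
      by simp
  qed
  then have "((\<lambda>s. norm (((f s - f t) - (s - t) *\<^sub>R D) /\<^sub>R norm (s - t))) \<longlongrightarrow> 0) (at t)
             \<longleftrightarrow> ((\<lambda>s. norm ((f s - f t) /\<^sub>R (s - t) - D)) \<longlongrightarrow> 0) (at t)"
    by (rule tendsto_cong)
  then show ?thesis
    unfolding has_vector_derivative_def has_derivative_at_within[of _ _ _ UNIV] tendsto_norm_zero_iff
    by (simp add: bounded_linear_scaleR_left Lim_null[symmetric])
qed

lemma has_vector_derivative_matrix_inv:
  fixes W :: "real \<Rightarrow> real^'n^'n"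
  assumes W: "(W has_vector_derivative W') (at t)" and inv: "invertible (W t)"
  shows "((\<lambda>s. matrix_inv (W s)) has_vector_derivative
           - (matrix_inv (W t) ** W' ** matrix_inv (W t))) (at t)"
proof -
  interpret mm: bounded_bilinear "(**) :: real^'n^'n \<Rightarrow> real^'n^'n \<Rightarrow> real^'n^'n"
    by (rule bounded_bilinear_matrix_matrix_mult)
  have lim: "(W \<longlongrightarrow> W t) (at t)"
    using has_vector_derivative_continuous[OF W] by (simp add: isCont_def)
  have "((\<lambda>s. - (matrix_inv (W s) ** ((W s - W t) /\<^sub>R (s - t)) ** matrix_inv (W t)))
          \<longlongrightarrow> - (matrix_inv (W t) ** W' ** matrix_inv (W t))) (at t)"
    using W[unfolded has_vector_derivative_iff_tendsto_quotient]
    by (intro tendsto_minus mm.tendsto[OF mm.tendsto[OF tendsto_matrix_inv[OF lim inv]] tendsto_const])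
  moreover have "\<forall>\<^sub>F s in at t. - (matrix_inv (W s) ** ((W s - W t) /\<^sub>R (s - t)) ** matrix_inv (W t))
                   = (matrix_inv (W s) - matrix_inv (W t)) /\<^sub>R (s - t)"
    using eventually_invertible[OF lim inv]
  proof eventually_elim
    case (elim s)
    show ?case
      unfolding matrix_inv_diff[OF elim inv]
      by (simp add: matrix_scalar_ac scalar_matrix_assoc[symmetric] scaleR_minus_right[symmetric]
          del: scaleR_minus_right)
  qed
  ultimately show ?thesis
    unfolding has_vector_derivative_iff_tendsto_quotient by (rule Lim_transform_eventually)
qed

lemma inner_transpose_matrix_mult:
  "x \<bullet> ((transpose P ** N) *v x) = (P *v x) \<bullet> (N *v (x::real^'n))"
proof -
  have "(transpose P ** N) *v x = (N *v x) v* P"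
    by (simp add: matrix_vector_mul_assoc[symmetric])
  then show ?thesis by (metis dot_lmul_matrix inner_commute)
qed

lemma inner_gram_nonneg: "0 \<le> x \<bullet> ((transpose C ** C) *v (x::real^'n))"
  by (simp add: inner_transpose_matrix_mult)

lemma inner_symmetric_matrix_commute:
  assumes "transpose U = U"
  shows "y \<bullet> (U *v w) = w \<bullet> (U *v (y::real^'n))"
  by (metis assms dot_lmul_matrix inner_commute transpose_matrix_vector)

lemma psd_cauchy_schwarz:
  fixes U :: "real^'n^'n"
  assumes sym: "transpose U = U" and psd: "\<And>y. 0 \<le> y \<bullet> (U *v y)"
  shows "(w \<bullet> (U *v y))\<^sup>2 \<le> (w \<bullet> (U *v w)) * (y \<bullet> (U *v y))"
proof -
  define a b c where "a = w \<bullet> (U *v w)" and "b = w \<bullet> (U *v y)" and "c = y \<bullet> (U *v y)"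
  have q: "0 \<le> a + 2 * l * b + l\<^sup>2 * c" for l
  proof -
    have "0 \<le> (w + l *\<^sub>R y) \<bullet> (U *v (w + l *\<^sub>R y))" by (rule psd)
    also have "\<dots> = a + l * (w \<bullet> (U *v y)) + l * (y \<bullet> (U *v w)) + l * l * c"
      by (simp add: a_def c_def matrix_vector_right_distrib matrix_vector_mult_scaleR inner_add_left
          inner_add_right algebra_simps)
    also have "\<dots> = a + 2 * l * b + l\<^sup>2 * c"
      using inner_symmetric_matrix_commute[OF sym, of y w]
      by (simp add: b_def power2_eq_square algebra_simps)
    finally show ?thesis .
  qed
  have "b\<^sup>2 \<le> a * c"
  proof (cases "c = 0")
    case True
    have "b = 0"
    proof (rule ccontr)
      assume "b \<noteq> 0"
      have "0 \<le> a + 2 * (- (a + 1) / (2 * b)) * b + (- (a + 1) / (2 * b))\<^sup>2 * c" by (rule q)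
      also have "\<dots> = -1" using \<open>b \<noteq> 0\<close> True by (simp add: field_simps)
      finally show False by simp
    qed
    then show ?thesis using True by simp
  next
    case False
    then have c: "c > 0" using psd[of y] by (simp add: c_def)
    have "0 \<le> a + 2 * (- b / c) * b + (- b / c)\<^sup>2 * c" by (rule q)
    also have "\<dots> = a - b\<^sup>2 / c" using c by (simp add: field_simps power2_eq_square)
    finally show ?thesis using c by (simp add: divide_le_eq)
  qed
  then show ?thesis by (simp add: a_def b_def c_def)
qed

lemma norm_psd_matrix_vector_power2_le:
  fixes U :: "real^'n^'n"
  assumes sym: "transpose U = U" and psd: "\<And>y. 0 \<le> y \<bullet> (U *v y)"
  shows "(norm (U *v y))\<^sup>2 \<le> norm U * (y \<bullet> (U *v y))"
proof (cases "U *v y = 0")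
  case False
  let ?w = "U *v y"
  have "((norm ?w)\<^sup>2)\<^sup>2 = (?w \<bullet> (U *v y))\<^sup>2" by (simp add: power2_norm_eq_inner)
  also have "\<dots> \<le> (?w \<bullet> (U *v ?w)) * (y \<bullet> (U *v y))" by (rule psd_cauchy_schwarz[OF sym psd])
  also have "\<dots> \<le> (norm ?w * (norm U * norm ?w)) * (y \<bullet> (U *v y))"
    by (intro mult_right_mono psd order_trans[OF norm_cauchy_schwarz] mult_left_mono
        norm_matrix_vector_mult_le norm_ge_zero)
  finally have "(norm ?w)\<^sup>2 * (norm ?w)\<^sup>2 \<le> (norm ?w)\<^sup>2 * (norm U * (y \<bullet> (U *v y)))"
    by (simp add: power2_eq_square algebra_simps)
  then show ?thesis by (rule mult_left_le_imp_le) (use False in simp)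
qed (use psd in simp)

lemma pos_def_invertible:
  fixes U :: "real^'n^'n"
  assumes "pos_def U"
  shows "invertible U"
proof -
  have "x = 0" if "U *v x = 0" for x
    using assms that unfolding pos_def_def by force
  then have "inj ((*v) U)"
    by (intro injI) (metis eq_iff_diff_eq_0 matrix_vector_mult_diff_distrib)
  then show ?thesis using matrix_left_invertible_injective invertible_left_inverse by blast
qed

lemma pos_def_matrix_inv:
  fixes U :: "real^'n^'n"
  assumes pd: "pos_def U"
  shows "pos_def (matrix_inv U)"
  unfolding pos_def_def symmetric_mat_def
proof (intro conjI allI impI)
  have inv: "invertible U" by (rule pos_def_invertible[OF pd])
  show "transpose (matrix_inv U) = matrix_inv U"
    using pd by (simp add: transpose_matrix_inv[OF inv] pos_def_def symmetric_mat_def)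
  fix z :: "real^'n" assume "z \<noteq> 0"
  define y where "y = matrix_inv U *v z"
  have z: "z = U *v y"
    by (simp add: y_def matrix_vector_mul_assoc matrix_inv_right[OF inv])
  with \<open>z \<noteq> 0\<close> have "y \<noteq> 0" by auto
  with pd have "y \<bullet> (U *v y) > 0" by (simp add: pos_def_def)
  then show "z \<bullet> (matrix_inv U *v z) > 0"
    by (simp add: z matrix_vector_mul_assoc matrix_inv_left[OF inv] inner_commute)
qed

lemma norm_quadratic_diff_le:
  fixes X Y C :: "real^'n^'n"
  assumes "norm X \<le> \<rho>" "norm Y \<le> \<rho>"
  shows "norm (X ** C ** X - Y ** C ** Y) \<le> 2 * norm C * \<rho> * norm (X - Y)"
proof -
  have "X ** C ** X - Y ** C ** Y = (X - Y) ** C ** X + Y ** C ** (X - Y)"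
    by (simp add: matrix_mult_distrib)
  also have "norm \<dots> \<le> norm (X - Y) * norm C * \<rho> + \<rho> * norm C * norm (X - Y)"
    by (intro order_trans[OF norm_triangle_ineq] add_mono
        order_trans[OF norm_matrix_mult3_le] mult_left_mono mult_right_mono assms) auto
  finally show ?thesis by (simp add: algebra_simps)
qed

lemma matpow_mult_commute: "matpow A j ** A = A ** matpow A j"
  by (induction j) (simp_all add: matrix_mul_assoc[symmetric])

lemma transpose_matpow: "transpose (matpow (transpose A) j) = matpow (A::real^'n^'n) j"
  by (induction j) (simp_all add: matrix_transpose_mul matpow_mult_commute)

text \<open>Controllability of \<open>(G\<^sup>T, B)\<close> is observability of \<open>(B\<^sup>T, G)\<close>.\<close>

lemma controllable_unobservable_eq_0:
  fixes G :: "real^'n^'n" and B :: "real^'k^'n"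
  assumes "controllable (transpose G) B" and "\<And>j. (transpose B ** matpow G j) *v x = 0"
  shows "x = 0"
proof -
  obtain m where m: "span (\<Union>j\<in>{0..m}. columns (matpow (transpose G) j ** B)) = UNIV"
    using assms(1) unfolding controllable_def by blast
  have "orthogonal x y" if "y \<in> (\<Union>j\<in>{0..m}. columns (matpow (transpose G) j ** B))" for y
  proof -
    from that obtain j i where y: "y = column i (matpow (transpose G) j ** B)"
      unfolding columns_def by blast
    have col: "x \<bullet> column i C = (transpose C *v x) $ i" for C :: "real^'k^'n"
      by (simp add: inner_vec_def column_def matrix_vector_mult_def transpose_def mult.commute)
    have "x \<bullet> y = ((transpose B ** matpow G j) *v x) $ i"
      unfolding y col by (simp only: matrix_transpose_mul transpose_matpow)
    then show ?thesis using assms(2) by (simp add: orthogonal_def)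
  qed
  then have "orthogonal x x" using orthogonal_to_span[of x _ x] m by blast
  then show ?thesis by (simp add: orthogonal_def)
qed

lemma inner_psd_sandwich_ge:
  fixes U Rt :: "real^'n^'n"
  assumes sym: "transpose U = U" and psd: "\<And>z. 0 \<le> z \<bullet> (U *v z)"
    and Rt: "norm Rt \<le> Rm" and U: "norm U \<le> \<rho>"
  shows "- (Rm * \<rho> * (y \<bullet> (U *v y))) \<le> (U *v y) \<bullet> (Rt *v (U *v y))"
proof -
  have "- ((U *v y) \<bullet> (Rt *v (U *v y))) \<le> norm (U *v y) * norm (Rt *v (U *v y))"
    using Cauchy_Schwarz_ineq2[of "U *v y" "Rt *v (U *v y)"] by linarith
  also have "\<dots> \<le> norm (U *v y) * (Rm * norm (U *v y))"
    using order_trans[OF norm_matrix_vector_mult_le mult_right_mono[OF Rt]] by (simp add: mult_left_mono)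
  also have "\<dots> = Rm * (norm (U *v y))\<^sup>2" by (simp add: power2_eq_square)
  also have "\<dots> \<le> Rm * (\<rho> * (y \<bullet> (U *v y)))"
    using norm_psd_matrix_vector_power2_le[OF sym psd, of y] mult_right_mono[OF U psd[of y]]
      order_trans[OF norm_ge_zero Rt]
    by (intro mult_left_mono) auto
  finally show ?thesis by (simp add: mult_ac)
qed

section \<open>Local existence and uniqueness for ordinary differential equations\<close>

primrec picard_iterate :: "(real \<Rightarrow> 'a \<Rightarrow> 'a) \<Rightarrow> 'a \<Rightarrow> nat \<Rightarrow> real \<Rightarrow> 'a::banach" where
  "picard_iterate F x0 0 = (\<lambda>t. x0)"
| "picard_iterate F x0 (Suc k) = (\<lambda>t. x0 + integral {0..t} (\<lambda>s. F s (picard_iterate F x0 k s)))"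

locale picard_contraction =
  fixes F :: "real \<Rightarrow> 'a::euclidean_space \<Rightarrow> 'a" and x0 :: 'a and e r M L :: real
  assumes e_pos: "0 < e" and M_nonneg: "0 \<le> M" and L_nonneg: "0 \<le> L"
    and M_e: "M * e \<le> r" and L_e: "L * e \<le> 1/2"
    and bounded: "\<And>t x. t \<in> {0..e} \<Longrightarrow> x \<in> cball x0 r \<Longrightarrow> norm (F t x) \<le> M"
    and lipschitz: "\<And>t x y. t \<in> {0..e} \<Longrightarrow> x \<in> cball x0 r \<Longrightarrow> y \<in> cball x0 r \<Longrightarrow>
       norm (F t x - F t y) \<le> L * norm (x - y)"
    and continuous: "\<And>y. continuous_on {0..e} y \<Longrightarrow> y ` {0..e} \<subseteq> cball x0 r \<Longrightarrow>
       continuous_on {0..e} (\<lambda>t. F t (y t))"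
begin

abbreviation "p \<equiv> picard_iterate F x0"

lemma r_nonneg: "0 \<le> r"
  using M_e M_nonneg e_pos by (smt (verit) mult_nonneg_nonneg)

lemma integrable_on_subinterval:
  assumes "continuous_on {0..e} y" "y ` {0..e} \<subseteq> cball x0 r" "t \<in> {0..e}"
  shows "(\<lambda>s. F s (y s)) integrable_on {0..t}"
  using assms continuous[OF assms(1,2)]
  by (intro integrable_continuous_real) (auto intro: continuous_on_subset)

lemma norm_integral_diff_le:
  assumes y: "continuous_on {0..e} y" "y ` {0..e} \<subseteq> cball x0 r"
    and z: "continuous_on {0..e} z" "z ` {0..e} \<subseteq> cball x0 r"
    and t: "t \<in> {0..e}" and yz: "\<And>s. s \<in> {0..t} \<Longrightarrow> norm (y s - z s) \<le> \<delta>"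
  shows "norm (integral {0..t} (\<lambda>s. F s (y s)) - integral {0..t} (\<lambda>s. F s (z s))) \<le> L * \<delta> * t"
proof -
  have "integral {0..t} (\<lambda>s. F s (y s)) - integral {0..t} (\<lambda>s. F s (z s))
        = integral {0..t} (\<lambda>s. F s (y s) - F s (z s))"
    using integral_diff[OF integrable_on_subinterval[OF y t] integrable_on_subinterval[OF z t]] ..
  also have "norm \<dots> \<le> L * \<delta> * (t - 0)"
  proof (rule integral_bound)
    show "continuous_on {0..t} (\<lambda>s. F s (y s) - F s (z s))"
      using continuous[OF y] continuous[OF z] t by (auto intro!: continuous_intros
          intro: continuous_on_subset)
    fix s assume s: "s \<in> {0..t}"
    then have "norm (F s (y s) - F s (z s)) \<le> L * norm (y s - z s)"
      using t y z by (intro lipschitz) (auto simp: image_subset_iff)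
    also have "\<dots> \<le> L * \<delta>" using yz[OF s] L_nonneg by (rule mult_left_mono)
    finally show "norm (F s (y s) - F s (z s)) \<le> L * \<delta>" .
  qed (use t in auto)
  finally show ?thesis by simp
qed

lemma iterate_continuous_in_ball: "continuous_on {0..e} (p k) \<and> p k ` {0..e} \<subseteq> cball x0 r"
proof (induction k)
  case 0
  then show ?case using r_nonneg by auto
next
  case (Suc k)
  have "norm (integral {0..t} (\<lambda>s. F s (p k s))) \<le> r" if t: "t \<in> {0..e}" for t
  proof -
    have "norm (integral {0..t} (\<lambda>s. F s (p k s))) \<le> M * (t - 0)"
    proof (rule integral_bound)
      show "continuous_on {0..t} (\<lambda>s. F s (p k s))"
        using Suc t continuous[of "p k"] by (auto intro: continuous_on_subset)
      show "norm (F s (p k s)) \<le> M" if "s \<in> {0..t}" for s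
        using Suc t that by (intro bounded) (auto simp: image_subset_iff)
    qed (use t in auto)
    also have "\<dots> \<le> M * e" using t M_nonneg by (simp add: mult_left_mono)
    finally show ?thesis using M_e by simp
  qed
  moreover have "continuous_on {0..e} (\<lambda>t. integral {0..t} (\<lambda>s. F s (p k s)))"
    using Suc continuous[of "p k"]
    by (intro indefinite_integral_continuous_1 integrable_continuous_real) auto
  ultimately show ?case
    by (auto simp: dist_norm intro!: continuous_intros)
qed

lemmas iterate_continuous = iterate_continuous_in_ball[THEN conjunct1]
lemmas iterate_in_ball = iterate_continuous_in_ball[THEN conjunct2]

lemma iterate_step_le: "t \<in> {0..e} \<Longrightarrow> norm (p (Suc k) t - p k t) \<le> r * (1/2)^k"
proof (induction k arbitrary: t)
  case 0
  then have "p 1 t \<in> cball x0 r" using iterate_in_ball[of 1] by blast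
  then show ?case by (simp add: dist_norm)
next
  case (Suc k)
  have "norm (p (Suc (Suc k)) t - p (Suc k) t) \<le> L * (r * (1/2)^k) * t"
    using norm_integral_diff_le[OF iterate_continuous iterate_in_ball iterate_continuous
        iterate_in_ball Suc.prems Suc.IH] Suc.prems by auto
  also have "\<dots> \<le> L * (r * (1/2)^k) * e"
    using Suc.prems L_nonneg r_nonneg by (intro mult_left_mono) auto
  also have "\<dots> \<le> (1/2) * (r * (1/2)^k)"
    using mult_right_mono[OF L_e, of "r * (1/2)^k"] r_nonneg by (simp add: mult_ac)
  finally show ?case by simp
qed

lemma iterate_dist_le:
  assumes t: "t \<in> {0..e}" and "k \<le> m"
  shows "norm (p m t - p k t) \<le> 2 * r * (1/2)^k"
proof -
  obtain d where m: "m = k + d" using \<open>k \<le> m\<close> le_Suc_ex by blast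
  have "norm (p (k + d) t - p k t) \<le> 2 * r * (1/2)^k * (1 - (1/2)^d)" for d
  proof (induction d)
    case (Suc d)
    have "norm (p (k + Suc d) t - p k t) \<le> norm (p (Suc (k + d)) t - p (k + d) t) + norm (p (k + d) t - p k t)"
      by (rule order_trans[OF _ norm_triangle_ineq]) simp
    also have "\<dots> \<le> r * (1/2)^(k + d) + 2 * r * (1/2)^k * (1 - (1/2)^d)"
      using iterate_step_le[OF t] Suc by (rule add_mono)
    also have "\<dots> = 2 * r * (1/2)^k * (1 - (1/2)^Suc d)"
      by (simp add: power_add algebra_simps)
    finally show ?case .
  qed simp
  moreover have "2 * r * (1/2)^k * (1 - (1/2)^d) \<le> 2 * r * (1/2::real)^k"
    using r_nonneg by (simp add: mult_left_le)
  ultimately show ?thesis unfolding m by (meson order_trans)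
qed

lemma geometric_bound_tendsto_0: "(\<lambda>k. 2 * r * (1/2::real)^k) \<longlonglongrightarrow> 0"
  by (intro tendsto_mult_right_zero LIMSEQ_realpow_zero) auto

definition picard_limit :: "real \<Rightarrow> 'a" where
  "picard_limit t = lim (\<lambda>k. p k t)"

lemma iterate_tendsto_limit:
  assumes t: "t \<in> {0..e}"
  shows "(\<lambda>k. p k t) \<longlonglongrightarrow> picard_limit t"
proof -
  have "Cauchy (\<lambda>k. p k t)"
  proof (rule metric_CauchyI)
    fix \<epsilon> :: real assume "\<epsilon> > 0"
    then obtain N where N: "\<And>k. k \<ge> N \<Longrightarrow> 2 * r * (1/2)^k < \<epsilon>"
      using geometric_bound_tendsto_0[unfolded LIMSEQ_def] by (fastforce simp: dist_real_def)
    have "dist (p m t) (p n t) < \<epsilon>" if "m \<ge> N" "n \<ge> N" for m n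
    proof (cases "n \<le> m")
      case True
      then show ?thesis using iterate_dist_le[OF t True] N[OF \<open>n \<ge> N\<close>] by (simp add: dist_norm)
    next
      case False
      then show ?thesis using iterate_dist_le[OF t, of m n] N[OF \<open>m \<ge> N\<close>]
        by (simp add: dist_norm norm_minus_commute)
    qed
    then show "\<exists>N. \<forall>m\<ge>N. \<forall>n\<ge>N. dist (p m t) (p n t) < \<epsilon>" by blast
  qed
  then show ?thesis by (simp add: picard_limit_def Cauchy_convergent_iff convergent_LIMSEQ_iff)
qed

lemma iterate_dist_limit_le:
  assumes t: "t \<in> {0..e}"
  shows "norm (p k t - picard_limit t) \<le> 2 * r * (1/2)^k"
proof -
  have "(\<lambda>m. norm (p m t - p k t)) \<longlonglongrightarrow> norm (picard_limit t - p k t)"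
    by (intro tendsto_intros iterate_tendsto_limit t)
  moreover have "\<forall>\<^sub>F m in sequentially. norm (p m t - p k t) \<le> 2 * r * (1/2)^k"
    using iterate_dist_le[OF t] by (auto simp: eventually_sequentially)
  ultimately show ?thesis
    by (simp add: norm_minus_commute tendsto_upperbound)
qed

lemma limit_continuous: "continuous_on {0..e} picard_limit"
proof (rule uniform_limit_theorem)
  show "uniform_limit {0..e} p picard_limit sequentially"
    unfolding uniform_limit_iff
  proof (intro allI impI)
    fix \<epsilon> :: real assume "\<epsilon> > 0"
    then obtain N where N: "\<And>k. k \<ge> N \<Longrightarrow> 2 * r * (1/2)^k < \<epsilon>"
      using geometric_bound_tendsto_0[unfolded LIMSEQ_def] by (fastforce simp: dist_real_def)
    then show "\<forall>\<^sub>F n in sequentially. \<forall>t\<in>{0..e}. dist (p n t) (picard_limit t) < \<epsilon>"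
      unfolding eventually_sequentially
      using iterate_dist_limit_le by (metis dist_norm order_le_less_trans)
  qed
qed (use iterate_continuous in auto)

lemma limit_in_ball: "picard_limit ` {0..e} \<subseteq> cball x0 r"
proof clarify
  fix t :: real assume t: "t \<in> {0..e}"
  have "\<forall>\<^sub>F k in sequentially. p k t \<in> cball x0 r"
    using iterate_in_ball t by (auto simp: image_subset_iff)
  then show "picard_limit t \<in> cball x0 r"
    by (rule Lim_in_closed_set[OF closed_cball _ _ iterate_tendsto_limit[OF t]]) simp
qed

lemma limit_0: "picard_limit 0 = x0"
proof -
  have "p k 0 = x0" for k by (cases k) simp_all
  then show ?thesis using iterate_tendsto_limit[of 0] e_pos LIMSEQ_unique[of "\<lambda>k. x0"] by auto
qed

lemma limit_integral_equation:
  assumes t: "t \<in> {0..e}"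
  shows "picard_limit t = x0 + integral {0..t} (\<lambda>s. F s (picard_limit s))"
proof -
  have "(\<lambda>k. p (Suc k) t - (x0 + integral {0..t} (\<lambda>s. F s (picard_limit s)))) \<longlonglongrightarrow> 0"
  proof (rule Lim_null_comparison)
    show "(\<lambda>k. L * (2 * r * (1/2)^k) * t) \<longlonglongrightarrow> 0"
      by (intro tendsto_mult_left_zero tendsto_mult_right_zero geometric_bound_tendsto_0)
    show "\<forall>\<^sub>F k in sequentially. norm (p (Suc k) t - (x0 + integral {0..t} (\<lambda>s. F s (picard_limit s))))
            \<le> L * (2 * r * (1/2)^k) * t"
      using norm_integral_diff_le[OF iterate_continuous iterate_in_ball limit_continuous limit_in_ball t]
        iterate_dist_limit_le t by auto
  qed
  then have "(\<lambda>k. p (Suc k) t) \<longlonglongrightarrow> x0 + integral {0..t} (\<lambda>s. F s (picard_limit s))"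
    by (simp add: Lim_null[symmetric] tendsto_add_const_iff)
  moreover have "(\<lambda>k. p (Suc k) t) \<longlonglongrightarrow> picard_limit t"
    using iterate_tendsto_limit[OF t] by (rule LIMSEQ_Suc)
  ultimately show ?thesis using LIMSEQ_unique by blast
qed

lemma limit_has_vector_derivative:
  assumes t: "t \<in> {0<..<e}"
  shows "(picard_limit has_vector_derivative F t (picard_limit t)) (at t)"
proof -
  have c: "continuous_on {0..e} (\<lambda>s. F s (picard_limit s))"
    by (rule continuous[OF limit_continuous limit_in_ball])
  have "((\<lambda>u. x0 + integral {0..u} (\<lambda>s. F s (picard_limit s))) has_vector_derivative F t (picard_limit t))
          (at t within {0..e})"
    using integral_has_vector_derivative[OF c, of t] t by (auto intro!: derivative_eq_intros)
  then have "((\<lambda>u. x0 + integral {0..u} (\<lambda>s. F s (picard_limit s))) has_vector_derivative F t (picard_limit t)) (at t)"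
    using t at_within_Icc_at[of 0 t e] by auto
  then show ?thesis
    by (rule has_vector_derivative_transform_within_open[where S="{0<..<e}"])
       (use t limit_integral_equation in auto)
qed

end

theorem picard_lindeloef_local:
  fixes F :: "real \<Rightarrow> 'a::euclidean_space \<Rightarrow> 'a"
  assumes a: "a > 0" and r: "r > 0" and M: "M \<ge> 0" and L: "L \<ge> 0"
    and bnd: "\<And>t x. t \<in> {0..a} \<Longrightarrow> x \<in> cball x0 r \<Longrightarrow> norm (F t x) \<le> M"
    and lip: "\<And>t x y. t \<in> {0..a} \<Longrightarrow> x \<in> cball x0 r \<Longrightarrow> y \<in> cball x0 r \<Longrightarrow>
               norm (F t x - F t y) \<le> L * norm (x - y)"
    and cont: "\<And>b y. b \<in> {0..a} \<Longrightarrow> continuous_on {0..b} y \<Longrightarrow> y ` {0..b} \<subseteq> cball x0 r \<Longrightarrow>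
               continuous_on {0..b} (\<lambda>t. F t (y t))"
  shows "\<exists>e>0. e \<le> a \<and> (\<exists>x. continuous_on {0..e} x \<and> x 0 = x0 \<and> (\<forall>t\<in>{0..e}. x t \<in> cball x0 r) \<and>
           (\<forall>t\<in>{0<..<e}. (x has_vector_derivative F t (x t)) (at t)))"
proof -
  define e where "e = min a (min (r / (M + 1)) (1 / (2 * (L + 1))))"
  have e: "0 < e" "e \<le> a" using a r M L by (auto simp: e_def)
  have "M * e \<le> r"
  proof -
    have "e \<le> r / (M + 1)" by (simp add: e_def)
    then have "(M + 1) * e \<le> r" using M by (simp add: field_simps)
    then show ?thesis using e by (simp add: algebra_simps)
  qed
  moreover have "L * e \<le> 1/2"
  proof -
    have "e \<le> 1 / (2 * (L + 1))" by (simp add: e_def)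
    then have "(L + 1) * e \<le> 1/2" using L by (simp add: field_simps)
    then show ?thesis using e by (simp add: algebra_simps)
  qed
  ultimately interpret picard_contraction F x0 e r M L
    using e M L bnd lip cont[of e] by unfold_locales auto
  show ?thesis
    using e limit_continuous limit_0 limit_in_ball limit_has_vector_derivative by blast
qed

lemma ode_solutions_eq:
  fixes X Y :: "real \<Rightarrow> 'a::real_inner"
  assumes "a \<le> b" and X: "continuous_on {a..b} X" and Y: "continuous_on {a..b} Y" and "X a = Y a"
    and X': "\<And>t. t \<in> {a<..<b} \<Longrightarrow> (X has_vector_derivative F t (X t)) (at t)"
    and Y': "\<And>t. t \<in> {a<..<b} \<Longrightarrow> (Y has_vector_derivative F t (Y t)) (at t)"
    and lip: "\<And>t. t \<in> {a<..<b} \<Longrightarrow> norm (F t (X t) - F t (Y t)) \<le> L * norm (X t - Y t)"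
    and t: "t \<in> {a..b}"
  shows "X t = Y t"
proof -
  define D where "D s = X s - Y s" for s
  define h where "h s = exp (- (2 * L) * s) * (D s \<bullet> D s)" for s
  have "h t \<le> h a"
  proof (rule DERIV_nonpos_imp_decreasing_open[of a t h])
    show "continuous_on {a..t} h"
      unfolding h_def D_def using X Y t by (auto intro!: continuous_intros intro: continuous_on_subset)
    fix s assume "a < s" "s < t"
    then have s: "s \<in> {a<..<b}" using t by auto
    define D' where "D' = F s (X s) - F s (Y s)"
    have "(D has_vector_derivative D') (at s)"
      unfolding D_def D'_def using X'[OF s] Y'[OF s] by (rule derivative_intros)
    then have "((\<lambda>s. D s \<bullet> D s) has_real_derivative 2 * (D s \<bullet> D')) (at s)"
      using bounded_bilinear.has_vector_derivative[OF bounded_bilinear_inner]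
      by (fastforce simp: has_real_derivative_iff_has_vector_derivative inner_commute)
    then have "(h has_real_derivative exp (- (2 * L) * s) * (2 * (D s \<bullet> D') - 2 * L * (D s \<bullet> D s))) (at s)"
      unfolding h_def by (auto intro!: derivative_eq_intros simp: algebra_simps)
    moreover have "D s \<bullet> D' \<le> L * (D s \<bullet> D s)"
    proof -
      have "D s \<bullet> D' \<le> norm (D s) * norm D'" by (rule norm_cauchy_schwarz)
      also have "\<dots> \<le> norm (D s) * (L * norm (D s))"
        using lip[OF s] by (intro mult_left_mono) (auto simp: D_def D'_def)
      finally show ?thesis by (simp add: power2_norm_eq_inner[symmetric] power2_eq_square mult_ac)
    qed
    ultimately show "\<exists>y. (h has_real_derivative y) (at s) \<and> y \<le> 0"
      by (intro exI conjI) (auto simp: mult_nonneg_nonpos)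
  qed (use t in auto)
  moreover have "h a = 0" by (simp add: h_def D_def \<open>X a = Y a\<close>)
  ultimately have "D t \<bullet> D t \<le> 0" by (simp add: h_def mult_le_0_iff)
  then show ?thesis by (metis D_def eq_iff_diff_eq_0 inner_gt_zero_iff not_le)
qed

lemma continuous_on_Icc_norm_bounded:
  fixes f :: "real \<Rightarrow> 'a::real_normed_vector"
  assumes "continuous_on {a..b} f"
  obtains M where "M \<ge> 0" "\<And>t. t \<in> {a..b} \<Longrightarrow> norm (f t) \<le> M"
proof -
  have "bounded (f ` {a..b})" using assms by (intro compact_imp_bounded compact_continuous_image) auto
  then obtain M where "\<forall>y\<in>f ` {a..b}. norm y \<le> M" by (auto simp: bounded_iff)
  then show ?thesis by (intro that[of "max M 0"]) (auto intro: le_max_iff_disj[THEN iffD2])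
qed

lemma ode_solutions_eq_locally_lipschitz:
  fixes X Y :: "real \<Rightarrow> 'a::real_inner"
  assumes "a \<le> b" and X: "continuous_on {a..b} X" and Y: "continuous_on {a..b} Y" and "X a = Y a"
    and "\<And>t. t \<in> {a<..<b} \<Longrightarrow> (X has_vector_derivative F t (X t)) (at t)"
    and "\<And>t. t \<in> {a<..<b} \<Longrightarrow> (Y has_vector_derivative F t (Y t)) (at t)"
    and lip: "\<And>\<rho>. \<exists>L. \<forall>t\<in>{a<..<b}. \<forall>x y. norm x \<le> \<rho> \<longrightarrow> norm y \<le> \<rho> \<longrightarrow>
                 norm (F t x - F t y) \<le> L * norm (x - y)"
    and t: "t \<in> {a..b}"
  shows "X t = Y t"
proof -
  obtain \<rho>X where \<rho>X: "\<And>t. t \<in> {a..b} \<Longrightarrow> norm (X t) \<le> \<rho>X"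
    using continuous_on_Icc_norm_bounded[OF X] by blast
  obtain \<rho>Y where \<rho>Y: "\<And>t. t \<in> {a..b} \<Longrightarrow> norm (Y t) \<le> \<rho>Y"
    using continuous_on_Icc_norm_bounded[OF Y] by blast
  obtain L where L: "\<forall>t\<in>{a<..<b}. \<forall>x y. norm x \<le> max \<rho>X \<rho>Y \<longrightarrow> norm y \<le> max \<rho>X \<rho>Y \<longrightarrow>
      norm (F t x - F t y) \<le> L * norm (x - y)"
    using lip by blast
  show ?thesis
  proof (rule ode_solutions_eq[OF assms(1-6) _ t])
    fix s assume "s \<in> {a<..<b}"
    with L \<rho>X \<rho>Y show "norm (F s (X s) - F s (Y s)) \<le> L * norm (X s - Y s)"
      by (meson greaterThanLessThan_iff atLeastAtMost_iff less_imp_le max.coboundedI1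
          max.coboundedI2 order_trans)
  qed
qed

lemma has_vector_derivative_congruence:
  fixes P U :: "real \<Rightarrow> real^'n^'n"
  assumes "(P has_vector_derivative - (A ** P t)) (at t)" and "(U has_vector_derivative U') (at t)"
  shows "((\<lambda>s. transpose (P s) ** U s ** P s) has_vector_derivative
           transpose (P t) ** (U' - (transpose A ** U t + U t ** A)) ** P t) (at t)"
proof -
  note mm = bounded_bilinear.has_vector_derivative[OF bounded_bilinear_matrix_matrix_mult]
  note tr = bounded_linear.has_vector_derivative[OF bounded_linear_transpose]
  show ?thesis
    by (rule has_vector_derivative_eq_rhs[OF mm[OF mm[OF tr[OF assms(1)] assms(2)] assms(1)]])
       (simp add: matrix_mult_distrib transpose_simps matrix_mul_assoc algebra_simps)
qed

lemma has_real_derivative_quadratic_form: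
  fixes M :: "real \<Rightarrow> real^'n^'n"
  assumes "(M has_vector_derivative M') (at s)"
  shows "((\<lambda>s. x \<bullet> (M s *v x)) has_real_derivative (x \<bullet> (M' *v x))) (at s)"
  using bounded_bilinear.has_vector_derivative[OF bounded_bilinear_inner has_vector_derivative_const
      bounded_bilinear.has_vector_derivative[OF bounded_bilinear_matrix_vector_mult assms
        has_vector_derivative_const]]
  by (simp add: has_real_derivative_iff_has_vector_derivative)

lemma nonneg_vanishing_if_derivative_ge:
  fixes q q' b :: "real \<Rightarrow> real"
  assumes q: "continuous_on {0..t} q" and nonneg: "\<And>s. s \<in> {0..t} \<Longrightarrow> 0 \<le> q s" and "q t = 0"
    and q': "\<And>s. s \<in> {0<..<t} \<Longrightarrow> (q has_real_derivative q' s) (at s)"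
    and ge: "\<And>s. s \<in> {0<..<t} \<Longrightarrow> b s - K * q s \<le> q' s" and b: "\<And>s. 0 \<le> b s"
  shows "\<And>s. s \<in> {0..t} \<Longrightarrow> q s = 0" and "\<And>s. s \<in> {0<..<t} \<Longrightarrow> b s = 0"
proof -
  show zero: "q s = 0" if s: "s \<in> {0..t}" for s
  proof -
    define h where "h s = exp (K * s) * q s" for s
    have "h s \<le> h t"
    proof (rule DERIV_nonneg_imp_increasing_open[of s t h])
      show "continuous_on {s..t} h"
        unfolding h_def using s by (auto intro!: continuous_intros intro: continuous_on_subset[OF q])
      fix r assume "s < r" "r < t"
      then have r: "r \<in> {0<..<t}" using s by auto
      have "(h has_real_derivative exp (K * r) * (K * q r + q' r)) (at r)"
        unfolding h_def by (auto intro!: derivative_eq_intros q'[OF r] simp: algebra_simps)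
      moreover have "0 \<le> K * q r + q' r" using ge[OF r] b[of r] by linarith
      ultimately show "\<exists>y. (h has_real_derivative y) (at r) \<and> 0 \<le> y" by auto
    qed (use s in auto)
    then have "q s \<le> 0" by (simp add: h_def \<open>q t = 0\<close> mult_le_0_iff)
    with nonneg[OF s] show ?thesis by simp
  qed
  fix s assume s: "s \<in> {0<..<t}"
  have "(q has_real_derivative 0) (at s)"
    by (rule has_field_derivative_transform_within_open[of "\<lambda>_. 0" 0 s "{0<..<t}"])
       (use s zero in auto)
  then have "q' s = 0" using q'[OF s] DERIV_unique by blast
  then show "b s = 0" using ge[OF s] b[of s] zero[of s] s by simp
qed

lemma controllable_output_vanishing_eq_0:
  fixes G :: "real^'n^'n" and B :: "real^'k^'n"
  assumes ctrl: "controllable (transpose G) B" and t: "0 < t"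
    and Q: "continuous_on {0..t} Q" "Q 0 = mat 1"
    and Q': "\<And>s. s \<in> {0<..<t} \<Longrightarrow> (Q has_vector_derivative - (G ** Q s)) (at s)"
    and zero: "\<And>s. s \<in> {0<..<t} \<Longrightarrow> (transpose B ** Q s) *v x = 0"
  shows "x = 0"
proof (rule controllable_unobservable_eq_0[OF ctrl])
  define y where "y j s = (transpose B ** matpow G j ** Q s) *v x" for j s
  have vanish: "\<forall>s\<in>{0<..<t}. y j s = 0" for j
  proof (induction j)
    case 0
    then show ?case using zero by (simp add: y_def)
  next
    case (Suc j)
    show ?case
    proof
      fix s assume s: "s \<in> {0<..<t}"
      have "(y j has_vector_derivative - y (Suc j) s) (at s)"
        unfolding y_def using bounded_bilinear.has_vector_derivative[OF bounded_bilinear_matrix_vector_mult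
            bounded_bilinear.has_vector_derivative[OF bounded_bilinear_matrix_matrix_mult
              has_vector_derivative_const Q'[OF s]] has_vector_derivative_const]
        by (simp add: y_def matrix_mult_distrib matrix_mul_assoc matpow_mult_commute[symmetric]
            bounded_bilinear.minus_left[OF bounded_bilinear_matrix_vector_mult])
      moreover have "(y j has_vector_derivative 0) (at s)"
        by (rule has_vector_derivative_transform_within_open[of "\<lambda>_. 0" 0 s "{0<..<t}"])
           (use s Suc.IH in auto)
      ultimately show "y (Suc j) s = 0" using vector_derivative_unique_at by fastforce
    qed
  qed
  have "y j 0 = 0" for j
  proof -
    have "continuous_on {0..t} (y j)"
      unfolding y_def using Q(1)
      by (auto intro!: bounded_bilinear.continuous_on[OF bounded_bilinear_matrix_vector_mult]
          bounded_bilinear.continuous_on[OF bounded_bilinear_matrix_matrix_mult])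
    then have "(y j \<longlongrightarrow> y j 0) (at_right 0)" using continuous_on_Icc_at_rightD t by blast
    moreover have "(y j \<longlongrightarrow> 0) (at_right 0)"
      by (rule tendsto_eventually, rule eventually_at_rightI[OF _ t]) (use vanish in auto)
    ultimately show ?thesis by (rule tendsto_unique[rotated]) simp
  qed
  then show "(transpose B ** matpow G j) *v x = 0" for j by (simp add: y_def Q(2))
qed

section \<open>The Riccati equation and its inverse\<close>

definition riccati_field :: "real^'n^'n \<Rightarrow> real^'n^'n \<Rightarrow> real^'n^'n \<Rightarrow> real^'n^'n \<Rightarrow> real^'n^'n" where
  "riccati_field G1 G2 Rt V = - (G1 ** V) - (V ** transpose G1) - Rt - (V ** G2 ** V)"

definition inverse_riccati_field ::
  "real^'n^'n \<Rightarrow> real^'n^'n \<Rightarrow> real^'n^'n \<Rightarrow> real^'n^'n \<Rightarrow> real^'n^'n" where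
  "inverse_riccati_field G1 G2 Rt U = G2 + U ** G1 + transpose G1 ** U + U ** Rt ** U"

lemma riccati_sol_iff:
  "riccati_sol G1 G2 R I V \<longleftrightarrow> (\<forall>t\<in>I. (V has_vector_derivative riccati_field G1 G2 (R t) (V t)) (at t))"
  by (simp add: riccati_sol_def riccati_field_def)

lemma riccati_field_lipschitz:
  assumes "norm X \<le> \<rho>" "norm Y \<le> \<rho>"
  shows "norm (riccati_field G1 G2 Rt X - riccati_field G1 G2 Rt Y)
           \<le> (2 * norm G1 + 2 * norm G2 * \<rho>) * norm (X - Y)"
proof -
  have "riccati_field G1 G2 Rt X - riccati_field G1 G2 Rt Y
        = - (G1 ** (X - Y) + (X - Y) ** transpose G1 + (X ** G2 ** X - Y ** G2 ** Y))"
    by (simp add: riccati_field_def matrix_mult_distrib algebra_simps)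
  also have "norm \<dots> \<le> norm G1 * norm (X - Y) + norm (X - Y) * norm G1 + 2 * norm G2 * \<rho> * norm (X - Y)"
    unfolding norm_minus_cancel
    using norm_matrix_mult_le[of G1 "X - Y"] norm_matrix_mult_le[of "X - Y" "transpose G1"]
      norm_quadratic_diff_le[OF assms, of G2]
    by (intro order_trans[OF norm_triangle_ineq] add_mono order_trans[OF norm_triangle_ineq])
       (simp_all add: norm_transpose)
  finally show ?thesis by (simp add: algebra_simps)
qed

lemma inverse_riccati_field_lipschitz:
  assumes "norm X \<le> \<rho>" "norm Y \<le> \<rho>"
  shows "norm (inverse_riccati_field G1 G2 Rt X - inverse_riccati_field G1 G2 Rt Y)
           \<le> (2 * norm G1 + 2 * norm Rt * \<rho>) * norm (X - Y)"
proof -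
  have "inverse_riccati_field G1 G2 Rt X - inverse_riccati_field G1 G2 Rt Y
        = (X - Y) ** G1 + transpose G1 ** (X - Y) + (X ** Rt ** X - Y ** Rt ** Y)"
    by (simp add: inverse_riccati_field_def matrix_mult_distrib algebra_simps)
  also have "norm \<dots> \<le> norm (X - Y) * norm G1 + norm G1 * norm (X - Y) + 2 * norm Rt * \<rho> * norm (X - Y)"
    using norm_matrix_mult_le[of "X - Y" G1] norm_matrix_mult_le[of "transpose G1" "X - Y"]
      norm_quadratic_diff_le[OF assms, of Rt]
    by (intro order_trans[OF norm_triangle_ineq] add_mono order_trans[OF norm_triangle_ineq])
       (simp_all add: norm_transpose)
  finally show ?thesis by (simp add: algebra_simps)
qed

lemma transpose_inverse_riccati_field:
  assumes "transpose G2 = G2" "transpose Rt = Rt"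
  shows "transpose (inverse_riccati_field G1 G2 Rt X) = inverse_riccati_field G1 G2 Rt (transpose X)"
  using assms by (simp add: inverse_riccati_field_def transpose_simps matrix_mul_assoc algebra_simps)

lemma inverse_riccati_field_matrix_inv:
  fixes U V :: "real^'n^'n"
  assumes "U ** V = mat 1" "V ** U = mat 1"
  shows "- (V ** inverse_riccati_field G1 G2 Rt U ** V) = riccati_field G1 G2 Rt V"
    and "- (U ** riccati_field G1 G2 Rt V ** U) = inverse_riccati_field G1 G2 Rt U"
proof -
  have "X ** U ** V = X" "X ** V ** U = X" for X :: "real^'n^'n"
    using assms by (simp_all add: matrix_mul_assoc[symmetric])
  then show "- (V ** inverse_riccati_field G1 G2 Rt U ** V) = riccati_field G1 G2 Rt V"
    and "- (U ** riccati_field G1 G2 Rt V ** U) = inverse_riccati_field G1 G2 Rt U"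
    by (simp_all add: inverse_riccati_field_def riccati_field_def matrix_mult_distrib
        matrix_mul_assoc assms algebra_simps)
qed

lemma has_vector_derivative_matrix_inv_riccati:
  assumes "(V has_vector_derivative riccati_field G1 G2 Rt (V t)) (at t)" and inv: "invertible (V t)"
  shows "((\<lambda>s. matrix_inv (V s)) has_vector_derivative
           inverse_riccati_field G1 G2 Rt (matrix_inv (V t))) (at t)"
  using has_vector_derivative_matrix_inv[OF assms]
    inverse_riccati_field_matrix_inv(2)[OF matrix_inv_left[OF inv] matrix_inv_right[OF inv]]
  by simp

lemma has_vector_derivative_matrix_inv_inverse_riccati:
  assumes "(U has_vector_derivative inverse_riccati_field G1 G2 Rt (U t)) (at t)" and inv: "invertible (U t)"
  shows "((\<lambda>s. matrix_inv (U s)) has_vector_derivative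
           riccati_field G1 G2 Rt (matrix_inv (U t))) (at t)"
  using has_vector_derivative_matrix_inv[OF assms]
    inverse_riccati_field_matrix_inv(1)[OF matrix_inv_right[OF inv] matrix_inv_left[OF inv]]
  by simp

lemma smooth_on_nonneg_imp_continuous_on:
  assumes "smooth_on_nonneg R"
  shows "continuous_on {0..} R"
proof -
  obtain D where "D 0 = R" and "\<And>t. t \<ge> 0 \<Longrightarrow> (D 0 has_vector_derivative D (Suc 0) t) (at t within {0..})"
    using assms unfolding smooth_on_nonneg_def by blast
  then show ?thesis
    by (auto simp: continuous_on_eq_continuous_within dest: has_vector_derivative_continuous)
qed

lemma inverse_riccati_local_solution:
  fixes G1 G2 :: "real^'n^'n"
  assumes R: "continuous_on {0..1} R"
  obtains e U where "0 < e" "e \<le> 1" "continuous_on {0..e} U" "U 0 = 0"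
    "\<And>t. t \<in> {0<..<e} \<Longrightarrow> (U has_vector_derivative inverse_riccati_field G1 G2 (R t) (U t)) (at t)"
proof -
  obtain Rm where Rm: "Rm \<ge> 0" "\<And>t. t \<in> {0..1} \<Longrightarrow> norm (R t) \<le> Rm"
    using continuous_on_Icc_norm_bounded[OF R] by blast
  define L where "L = 2 * norm G1 + 2 * Rm"
  have lip: "norm (inverse_riccati_field G1 G2 (R t) X - inverse_riccati_field G1 G2 (R t) Y) \<le> L * norm (X - Y)"
    if "t \<in> {0..1}" "X \<in> cball 0 1" "Y \<in> cball 0 1" for t X Y
  proof -
    have "norm (inverse_riccati_field G1 G2 (R t) X - inverse_riccati_field G1 G2 (R t) Y)
          \<le> (2 * norm G1 + 2 * norm (R t) * 1) * norm (X - Y)"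
      using that by (intro inverse_riccati_field_lipschitz) auto
    also have "\<dots> \<le> L * norm (X - Y)"
      unfolding L_def using Rm(2)[OF that(1)] by (intro mult_right_mono) auto
    finally show ?thesis .
  qed
  have "\<exists>e>0. e \<le> 1 \<and> (\<exists>U. continuous_on {0..e} U \<and> U 0 = 0 \<and> (\<forall>t\<in>{0..e}. U t \<in> cball 0 1) \<and>
          (\<forall>t\<in>{0<..<e}. (U has_vector_derivative inverse_riccati_field G1 G2 (R t) (U t)) (at t)))"
  proof (rule picard_lindeloef_local[where M = "norm G2 + L" and L = L])
    fix t X assume "t \<in> {0..1::real}" "X \<in> cball (0::real^'n^'n) 1"
    then have "norm (inverse_riccati_field G1 G2 (R t) X - inverse_riccati_field G1 G2 (R t) 0) \<le> L * norm X"
      using lip[of t X 0] by simp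
    also have "\<dots> \<le> L" using \<open>X \<in> cball 0 1\<close> Rm(1) by (simp add: L_def mult_left_le)
    finally have "norm (inverse_riccati_field G1 G2 (R t) X - G2) \<le> L"
      by (simp add: inverse_riccati_field_def)
    then show "norm (inverse_riccati_field G1 G2 (R t) X) \<le> norm G2 + L"
      using norm_triangle_sub[of "inverse_riccati_field G1 G2 (R t) X" G2] by linarith
  next
    fix b and Y :: "real \<Rightarrow> real^'n^'n" assume "b \<in> {0..1}" "continuous_on {0..b} Y"
    then show "continuous_on {0..b} (\<lambda>t. inverse_riccati_field G1 G2 (R t) (Y t))"
      using continuous_on_subset[OF R, of "{0..b}"] unfolding inverse_riccati_field_def
      by (auto intro!: continuous_intros bounded_bilinear.continuous_on[OF bounded_bilinear_matrix_matrix_mult])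
  qed (use lip Rm in \<open>auto simp: L_def\<close>)
  then show ?thesis using that by blast
qed

lemma linear_fundamental_solution:
  fixes A :: "real \<Rightarrow> real^'n^'n"
  assumes a: "0 < a" and A: "continuous_on {0..a} A"
  obtains e P where "0 < e" "e \<le> a" "continuous_on {0..e} P" "P 0 = mat 1"
    "\<And>t. t \<in> {0..e} \<Longrightarrow> invertible (P t)"
    "\<And>t. t \<in> {0<..<e} \<Longrightarrow> (P has_vector_derivative - (A t ** P t)) (at t)"
proof -
  obtain M where M: "M \<ge> 0" "\<And>t. t \<in> {0..a} \<Longrightarrow> norm (A t) \<le> M"
    using continuous_on_Icc_norm_bounded[OF A] by blast
  define K where "K = norm (mat 1 :: real^'n^'n) + 1"
  have K: "norm X \<le> K" if "X \<in> cball (mat 1) (1/2)" for X :: "real^'n^'n"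
    using that norm_triangle_sub[of X "mat 1"] by (auto simp: K_def dist_norm norm_minus_commute)
  have "\<exists>e>0. e \<le> a \<and> (\<exists>P. continuous_on {0..e} P \<and> P 0 = mat 1 \<and> (\<forall>t\<in>{0..e}. P t \<in> cball (mat 1) (1/2)) \<and>
           (\<forall>t\<in>{0<..<e}. (P has_vector_derivative - (A t ** P t)) (at t)))"
  proof (rule picard_lindeloef_local[where M = "M * K" and L = M])
    fix t and X Y :: "real^'n^'n" assume t: "t \<in> {0..a}" and X: "X \<in> cball (mat 1) (1/2)"
    show "norm (- (A t ** X)) \<le> M * K"
      using norm_matrix_mult_le[of "A t" X] mult_mono[OF M(2)[OF t] K[OF X]] M(1) by simp
    show "norm (- (A t ** X) - - (A t ** Y)) \<le> M * norm (X - Y)"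
      using norm_matrix_mult_le[of "A t" "Y - X"] mult_right_mono[OF M(2)[OF t], of "norm (X - Y)"]
      by (simp add: matrix_mult_distrib norm_minus_commute)
  next
    fix b and Y :: "real \<Rightarrow> real^'n^'n" assume "b \<in> {0..a}" "continuous_on {0..b} Y"
    then show "continuous_on {0..b} (\<lambda>t. - (A t ** Y t))"
      using continuous_on_subset[OF A, of "{0..b}"]
      by (auto intro!: continuous_intros bounded_bilinear.continuous_on[OF bounded_bilinear_matrix_matrix_mult])
  qed (use a M K_def in auto)
  then obtain e P where "0 < e" "e \<le> a" "continuous_on {0..e} P" "P 0 = mat 1"
    "\<And>t. t \<in> {0..e} \<Longrightarrow> P t \<in> cball (mat 1) (1/2)"
    "\<And>t. t \<in> {0<..<e} \<Longrightarrow> (P has_vector_derivative - (A t ** P t)) (at t)"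
    by blast
  moreover have "invertible (P t)" if "P t \<in> cball (mat 1) (1/2)" for t
    using that by (intro invertible_if_norm_diff_mat_1_less) (simp add: dist_norm norm_minus_commute)
  ultimately show ?thesis using that by blast
qed

lemma inverse_riccati_field_locally_lipschitz:
  fixes R :: "real \<Rightarrow> real^'n^'n"
  assumes "continuous_on {a..b} R"
  shows "\<exists>L. \<forall>t\<in>{a<..<b}. \<forall>X Y. norm X \<le> \<rho> \<longrightarrow> norm Y \<le> \<rho> \<longrightarrow>
           norm (inverse_riccati_field G1 G2 (R t) X - inverse_riccati_field G1 G2 (R t) Y) \<le> L * norm (X - Y)"
proof -
  obtain Rm where Rm: "\<And>t. t \<in> {a..b} \<Longrightarrow> norm (R t) \<le> Rm"
    using continuous_on_Icc_norm_bounded[OF assms] by blast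
  have "norm (inverse_riccati_field G1 G2 (R t) X - inverse_riccati_field G1 G2 (R t) Y)
          \<le> (2 * norm G1 + 2 * Rm * \<bar>\<rho>\<bar>) * norm (X - Y)"
    if "t \<in> {a<..<b}" "norm X \<le> \<rho>" "norm Y \<le> \<rho>" for t X Y
  proof -
    have "norm (inverse_riccati_field G1 G2 (R t) X - inverse_riccati_field G1 G2 (R t) Y)
            \<le> (2 * norm G1 + 2 * norm (R t) * \<bar>\<rho>\<bar>) * norm (X - Y)"
      using that by (intro inverse_riccati_field_lipschitz) auto
    also have "\<dots> \<le> (2 * norm G1 + 2 * Rm * \<bar>\<rho>\<bar>) * norm (X - Y)"
      using Rm[of t] that by (intro mult_right_mono add_left_mono mult_right_mono) auto
    finally show ?thesis .
  qed
  then show ?thesis by blast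
qed

lemma riccati_field_locally_lipschitz:
  "\<exists>L. \<forall>t\<in>I. \<forall>X Y. norm X \<le> \<rho> \<longrightarrow> norm Y \<le> \<rho> \<longrightarrow>
     norm (riccati_field G1 G2 (R t) X - riccati_field G1 G2 (R t) Y) \<le> L * norm (X - Y)"
  using riccati_field_lipschitz by blast

lemma inverse_riccati_field_congruence_identity:
  assumes "transpose U = U" "transpose Rt = Rt"
  shows "inverse_riccati_field G1 G2 Rt U - (transpose (G1 + (1/2) *\<^sub>R (Rt ** U)) ** U
           + U ** (G1 + (1/2) *\<^sub>R (Rt ** U))) = G2"
proof -
  have "transpose (G1 + (1/2) *\<^sub>R (Rt ** U)) ** U + U ** (G1 + (1/2) *\<^sub>R (Rt ** U))
        = transpose G1 ** U + U ** G1 + ((1/2) *\<^sub>R (U ** Rt ** U) + (1/2) *\<^sub>R (U ** Rt ** U))"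
    using assms by (simp add: transpose_simps matrix_mult_distrib matrix_mult_scaleR
        matrix_mul_assoc algebra_simps)
  also have "\<dots> = transpose G1 ** U + U ** G1 + U ** Rt ** U"
    by (simp add: scaleR_left_distrib[symmetric])
  finally show ?thesis by (simp add: inverse_riccati_field_def algebra_simps)
qed

locale inverse_riccati_solution =
  fixes G1 :: "real^'n^'n" and B :: "real^'k^'n" and R U :: "real \<Rightarrow> real^'n^'n" and e :: real
  assumes e_pos: "0 < e"
    and R_cont: "continuous_on {0..e} R" and R_sym: "\<And>t. t \<in> {0..e} \<Longrightarrow> transpose (R t) = R t"
    and U_cont: "continuous_on {0..e} U" and U_0: "U 0 = 0"
    and U_deriv: "\<And>t. t \<in> {0<..<e} \<Longrightarrow>
       (U has_vector_derivative inverse_riccati_field G1 (B ** transpose B) (R t) (U t)) (at t)"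
begin

lemma U_sym: "t \<in> {0..e} \<Longrightarrow> transpose (U t) = U t"
proof (rule ode_solutions_eq_locally_lipschitz[of 0 e _ U])
  show "((\<lambda>s. transpose (U s)) has_vector_derivative
      inverse_riccati_field G1 (B ** transpose B) (R t) (transpose (U t))) (at t)" if "t \<in> {0<..<e}" for t
  proof -
    have "transpose (inverse_riccati_field G1 (B ** transpose B) (R t) (U t))
          = inverse_riccati_field G1 (B ** transpose B) (R t) (transpose (U t))"
      using that by (intro transpose_inverse_riccati_field) (auto simp: matrix_transpose_mul R_sym)
    then show ?thesis
      using bounded_linear.has_vector_derivative[OF bounded_linear_transpose U_deriv[OF that]] by simp
  qed
qed (use e_pos U_cont U_0 U_deriv inverse_riccati_field_locally_lipschitz[OF R_cont] in
     \<open>auto intro: bounded_linear.continuous_on[OF bounded_linear_transpose]\<close>)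

lemma U_psd_if_congruence:
  fixes P :: "real \<Rightarrow> real^'n^'n"
  assumes t: "t \<in> {0..e}" and P: "continuous_on {0..t} P" "invertible (P t)"
    and P': "\<And>s. s \<in> {0<..<t} \<Longrightarrow>
       (P has_vector_derivative - ((G1 + (1/2) *\<^sub>R (R s ** U s)) ** P s)) (at s)"
  shows "0 \<le> z \<bullet> (U t *v z)"
proof -
  define x where "x = matrix_inv (P t) *v z"
  define f where "f s = x \<bullet> ((transpose (P s) ** U s ** P s) *v x)" for s
  have "f 0 \<le> f t"
  proof (rule DERIV_nonneg_imp_increasing_open[of 0 t f])
    show "continuous_on {0..t} f"
      unfolding f_def using t P(1) continuous_on_subset[OF U_cont]
      by (intro continuous_intros bounded_bilinear.continuous_on[OF bounded_bilinear_matrix_vector_mult]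
          bounded_bilinear.continuous_on[OF bounded_bilinear_matrix_matrix_mult]
          bounded_linear.continuous_on[OF bounded_linear_transpose]) auto
    fix s assume "0 < s" "s < t"
    then have s: "s \<in> {0<..<t}" "s \<in> {0<..<e}" "s \<in> {0..e}" using t by auto
    have "((\<lambda>s. transpose (P s) ** U s ** P s) has_vector_derivative
            transpose (P s) ** (B ** transpose B) ** P s) (at s)"
      using has_vector_derivative_congruence[OF P'[OF s(1)] U_deriv[OF s(2)]] s(3)
      by (simp add: inverse_riccati_field_congruence_identity U_sym R_sym)
    from has_real_derivative_quadratic_form[OF this, of x]
    have "(f has_real_derivative x \<bullet> ((transpose (P s) ** (B ** transpose B) ** P s) *v x)) (at s)"
      unfolding f_def .
    moreover have "transpose (P s) ** (B ** transpose B) ** P s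
                   = transpose (transpose B ** P s) ** (transpose B ** P s)"
      by (simp add: matrix_transpose_mul matrix_mul_assoc)
    ultimately show "\<exists>y. (f has_real_derivative y) (at s) \<and> 0 \<le> y"
      using inner_gram_nonneg by metis
  qed (use t in auto)
  moreover have "f 0 = 0" by (simp add: f_def U_0)
  moreover have Px: "P t *v x = z"
    by (simp add: x_def matrix_vector_mul_assoc matrix_inv_right[OF P(2)])
  then have "f t = z \<bullet> (U t *v z)"
    unfolding f_def matrix_mul_assoc[symmetric] inner_transpose_matrix_mult Px
    by (simp add: matrix_vector_mul_assoc[symmetric] Px)
  ultimately show ?thesis by simp
qed

lemma U_psd_near_0:
  obtains \<epsilon> where "0 < \<epsilon>" "\<epsilon> \<le> e" "\<And>t z. t \<in> {0..\<epsilon>} \<Longrightarrow> 0 \<le> z \<bullet> (U t *v z)"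
proof -
  have "continuous_on {0..e} (\<lambda>t. G1 + (1/2) *\<^sub>R (R t ** U t))"
    using R_cont U_cont
    by (intro continuous_intros bounded_bilinear.continuous_on[OF bounded_bilinear_matrix_matrix_mult])
  then obtain \<epsilon> P where \<epsilon>: "0 < \<epsilon>" "\<epsilon> \<le> e" and P: "continuous_on {0..\<epsilon>} P" "P 0 = mat 1"
    and P_inv: "\<And>t. t \<in> {0..\<epsilon>} \<Longrightarrow> invertible (P t)"
    and P': "\<And>t. t \<in> {0<..<\<epsilon>} \<Longrightarrow>
       (P has_vector_derivative - ((G1 + (1/2) *\<^sub>R (R t ** U t)) ** P t)) (at t)"
    by (rule linear_fundamental_solution[OF e_pos]) blast
  have "0 \<le> z \<bullet> (U t *v z)" if "t \<in> {0..\<epsilon>}" for t z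
  proof (rule U_psd_if_congruence)
    show "continuous_on {0..t} P" using that by (auto intro: continuous_on_subset[OF P(1)])
  qed (use that \<epsilon> P_inv P' in auto)
  then show ?thesis using that \<epsilon> by blast
qed

lemma has_real_derivative_congruent_quadratic_form:
  fixes Q :: "real \<Rightarrow> real^'n^'n"
  assumes s: "s \<in> {0<..<e}" and Q': "(Q has_vector_derivative - (G1 ** Q s)) (at s)"
  shows "((\<lambda>r. (Q r *v x) \<bullet> (U r *v (Q r *v x))) has_real_derivative
           (norm (transpose B *v (Q s *v x)))\<^sup>2 + (U s *v (Q s *v x)) \<bullet> (R s *v (U s *v (Q s *v x)))) (at s)"
proof -
  have congr: "x \<bullet> ((transpose (Q r) ** M ** Q r) *v x) = (Q r *v x) \<bullet> (M *v (Q r *v x))"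
    for r and M :: "real^'n^'n"
    unfolding matrix_mul_assoc[symmetric] inner_transpose_matrix_mult
    by (simp add: matrix_vector_mul_assoc)
  have "((\<lambda>r. transpose (Q r) ** U r ** Q r) has_vector_derivative
          transpose (Q s) ** (B ** transpose B + U s ** R s ** U s) ** Q s) (at s)"
    using has_vector_derivative_congruence[OF Q' U_deriv[OF s]]
    by (simp add: inverse_riccati_field_def algebra_simps)
  from has_real_derivative_quadratic_form[OF this, of x]
  have "((\<lambda>r. (Q r *v x) \<bullet> (U r *v (Q r *v x))) has_real_derivative
          (Q s *v x) \<bullet> ((B ** transpose B + U s ** R s ** U s) *v (Q s *v x))) (at s)"
    unfolding congr .
  moreover have "y \<bullet> ((B ** transpose B + U s ** R s ** U s) *v y)
                 = (norm (transpose B *v y))\<^sup>2 + (U s *v y) \<bullet> (R s *v (U s *v y))" for y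
  proof -
    have "B ** transpose B = transpose (transpose B) ** transpose B" by simp
    then have "y \<bullet> ((B ** transpose B) *v y) = (norm (transpose B *v y))\<^sup>2"
      by (simp only: inner_transpose_matrix_mult power2_norm_eq_inner)
    moreover have "U s ** R s ** U s = transpose (U s) ** (R s ** U s)"
      using U_sym[of s] s by (simp add: matrix_mul_assoc)
    then have "y \<bullet> ((U s ** R s ** U s) *v y) = (U s *v y) \<bullet> ((R s ** U s) *v y)"
      by (simp only: inner_transpose_matrix_mult)
    then have "y \<bullet> ((U s ** R s ** U s) *v y) = (U s *v y) \<bullet> (R s *v (U s *v y))"
      by (simp only: matrix_vector_mul_assoc)
    ultimately show ?thesis by (simp add: matrix_vector_mult_add_rdistrib inner_add_right)
  qed
  ultimately show ?thesis by simp
qed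

lemma U_definite_if_controllable:
  fixes Q :: "real \<Rightarrow> real^'n^'n"
  assumes ctrl: "controllable (transpose G1) B" and t: "0 < t" "t \<le> e"
    and psd: "\<And>s z. s \<in> {0..t} \<Longrightarrow> 0 \<le> z \<bullet> (U s *v z)"
    and Q: "continuous_on {0..t} Q" "Q 0 = mat 1" "invertible (Q t)"
    and Q': "\<And>s. s \<in> {0<..<t} \<Longrightarrow> (Q has_vector_derivative - (G1 ** Q s)) (at s)"
    and "z \<noteq> 0"
  shows "0 < z \<bullet> (U t *v z)"
proof (rule ccontr)
  assume "\<not> 0 < z \<bullet> (U t *v z)"
  then have Uz: "z \<bullet> (U t *v z) = 0" using psd[of t z] t by auto
  obtain Rm where Rm: "\<And>s. s \<in> {0..e} \<Longrightarrow> norm (R s) \<le> Rm"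
    using continuous_on_Icc_norm_bounded[OF R_cont] by blast
  obtain \<rho> where \<rho>: "\<And>s. s \<in> {0..e} \<Longrightarrow> norm (U s) \<le> \<rho>"
    using continuous_on_Icc_norm_bounded[OF U_cont] by blast
  define x where "x = matrix_inv (Q t) *v z"
  have Qx: "Q t *v x = z" by (simp add: x_def matrix_vector_mul_assoc matrix_inv_right[OF Q(3)])
  define q where "q r = (Q r *v x) \<bullet> (U r *v (Q r *v x))" for r
  define b where "b r = (norm (transpose B *v (Q r *v x)))\<^sup>2" for r
  have "b s = 0" if "s \<in> {0<..<t}" for s
  proof (rule nonneg_vanishing_if_derivative_ge(2)[of t q _ b "Rm * \<rho>", OF _ _ _ _ _ _ that])
    show "continuous_on {0..t} q"
      unfolding q_def using t Q(1) continuous_on_subset[OF U_cont]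
      by (intro continuous_intros bounded_bilinear.continuous_on[OF bounded_bilinear_matrix_vector_mult]) auto
    show "q s \<ge> 0" if "s \<in> {0..t}" for s using psd that by (simp add: q_def)
    show "q t = 0" using Uz by (simp add: q_def Qx)
    fix s assume s: "s \<in> {0<..<t}"
    then have s': "s \<in> {0<..<e}" "s \<in> {0..e}" "s \<in> {0..t}" using t by auto
    show "(q has_real_derivative b s + (U s *v (Q s *v x)) \<bullet> (R s *v (U s *v (Q s *v x)))) (at s)"
      unfolding q_def b_def by (rule has_real_derivative_congruent_quadratic_form[OF s'(1) Q'[OF s]])
    show "b s - Rm * \<rho> * q s \<le> b s + (U s *v (Q s *v x)) \<bullet> (R s *v (U s *v (Q s *v x)))"
      using inner_psd_sandwich_ge[OF U_sym[OF s'(2)] psd[OF s'(3)] Rm[OF s'(2)] \<rho>[OF s'(2)]]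
      by (simp add: q_def)
  qed (simp add: b_def)
  then have "x = 0"
    using t Q Q' by (intro controllable_output_vanishing_eq_0[OF ctrl, of t Q])
      (auto simp: b_def matrix_vector_mul_assoc)
  then show False using Qx \<open>z \<noteq> 0\<close> by simp
qed

lemma U_pos_def_near_0:
  assumes ctrl: "controllable (transpose G1) B"
  obtains \<epsilon> where "0 < \<epsilon>" "\<epsilon> \<le> e" "\<And>t. t \<in> {0<..<\<epsilon>} \<Longrightarrow> pos_def (U t)"
proof -
  obtain \<epsilon>1 where \<epsilon>1: "0 < \<epsilon>1" "\<epsilon>1 \<le> e" and psd: "\<And>t z. t \<in> {0..\<epsilon>1} \<Longrightarrow> 0 \<le> z \<bullet> (U t *v z)"
    by (rule U_psd_near_0) blast
  obtain \<epsilon> Q where \<epsilon>: "0 < \<epsilon>" "\<epsilon> \<le> \<epsilon>1" and Q: "continuous_on {0..\<epsilon>} Q" "Q 0 = mat 1"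
    and Q_inv: "\<And>t. t \<in> {0..\<epsilon>} \<Longrightarrow> invertible (Q t)"
    and Q': "\<And>t. t \<in> {0<..<\<epsilon>} \<Longrightarrow> (Q has_vector_derivative - (G1 ** Q t)) (at t)"
    by (rule linear_fundamental_solution[OF \<epsilon>1(1), of "\<lambda>_. G1"]) auto
  have "0 < z \<bullet> (U t *v z)" if t: "t \<in> {0<..<\<epsilon>}" and "z \<noteq> 0" for t z
  proof (rule U_definite_if_controllable[OF ctrl])
    show "continuous_on {0..t} Q" using t by (auto intro: continuous_on_subset[OF Q(1)])
  qed (use t \<open>z \<noteq> 0\<close> \<epsilon> \<epsilon>1 psd Q Q_inv Q' in auto)
  then show ?thesis
    using that[of \<epsilon>] \<epsilon> \<epsilon>1 U_sym by (auto simp: pos_def_def symmetric_mat_def)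
qed

end

section \<open>Well-posedness of the singular Cauchy problem\<close>

lemma riccati_solution_near_0:
  fixes G1 :: "real^'n^'n" and B :: "real^'k^'n" and R :: "real \<Rightarrow> real^'n^'n"
  assumes ctrl: "controllable (transpose G1) B" and R: "continuous_on {0..} R"
    and R_sym: "\<And>t. t \<ge> 0 \<Longrightarrow> symmetric_mat (R t)"
  obtains e V where "0 < e" "riccati_sol G1 (B ** transpose B) R (ival (ereal e)) V" "inv_to_zero V"
    "\<And>t. 0 < t \<Longrightarrow> t < e \<Longrightarrow> pos_def (V t)"
proof -
  have "continuous_on {0..1} R" using R by (rule continuous_on_subset) auto
  then obtain e1 U where e1: "0 < e1" "e1 \<le> 1" and U: "continuous_on {0..e1} U" "U 0 = 0"
    and U': "\<And>t. t \<in> {0<..<e1} \<Longrightarrow>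
      (U has_vector_derivative inverse_riccati_field G1 (B ** transpose B) (R t) (U t)) (at t)"
    by (rule inverse_riccati_local_solution) blast
  interpret inverse_riccati_solution G1 B R U e1
    using e1 U U' R R_sym by unfold_locales (auto intro: continuous_on_subset simp: symmetric_mat_def)
  obtain \<epsilon> where \<epsilon>: "0 < \<epsilon>" "\<epsilon> \<le> e1" and pd: "\<And>t. t \<in> {0<..<\<epsilon>} \<Longrightarrow> pos_def (U t)"
    using U_pos_def_near_0[OF ctrl] by blast
  define V where "V t = matrix_inv (U t)" for t
  show ?thesis
  proof (rule that[OF \<epsilon>(1)])
    have "ival (ereal \<epsilon>) = {0<..<\<epsilon>}" by (auto simp: ival_def)
    then show "riccati_sol G1 (B ** transpose B) R (ival (ereal \<epsilon>)) V"
      unfolding riccati_sol_iff V_def using \<epsilon>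
      by (auto intro!: has_vector_derivative_matrix_inv_inverse_riccati U' pos_def_invertible pd)
    show V_pd: "pos_def (V t)" if "0 < t" "t < \<epsilon>" for t
      unfolding V_def using that by (intro pos_def_matrix_inv pd) auto
    have "\<forall>\<^sub>F t in at_right 0. U t = matrix_inv (V t)"
      by (rule eventually_at_rightI[OF _ \<epsilon>(1)])
         (simp add: V_def matrix_inv_matrix_inv pos_def_invertible pd)
    moreover have "(U \<longlongrightarrow> 0) (at_right 0)"
      using continuous_on_Icc_at_rightD[OF U(1) e1(1)] U(2) by simp
    ultimately have "((\<lambda>t. matrix_inv (V t)) \<longlongrightarrow> 0) (at_right 0)"
      by (rule Lim_transform_eventually[rotated])
    then show "inv_to_zero V"
      unfolding inv_to_zero_def using \<epsilon>(1) V_pd pos_def_invertible by blast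
  qed
qed

lemma matrix_inv_riccati_solution_extension:
  fixes W :: "real \<Rightarrow> real^'n^'n"
  assumes "0 < b"
    and W': "\<And>t. t \<in> {0<..b} \<Longrightarrow> (W has_vector_derivative riccati_field G1 G2 (R t) (W t)) (at t)"
    and inv: "\<And>t. t \<in> {0<..b} \<Longrightarrow> invertible (W t)"
    and lim: "((\<lambda>t. matrix_inv (W t)) \<longlongrightarrow> 0) (at_right 0)"
  defines "U \<equiv> \<lambda>t. if t = 0 then 0 else matrix_inv (W t)"
  shows "continuous_on {0..b} U"
    and "\<And>t. t \<in> {0<..<b} \<Longrightarrow> (U has_vector_derivative inverse_riccati_field G1 G2 (R t) (U t)) (at t)"
proof -
  have U': "(U has_vector_derivative inverse_riccati_field G1 G2 (R t) (U t)) (at t)" if "t \<in> {0<..b}" for t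
  proof (rule has_vector_derivative_transform_within_open[where S="{0<..}"])
    show "((\<lambda>s. matrix_inv (W s)) has_vector_derivative inverse_riccati_field G1 G2 (R t) (U t)) (at t)"
      using has_vector_derivative_matrix_inv_riccati[OF W' inv, OF that that] that by (simp add: U_def)
  qed (use that in \<open>auto simp: U_def\<close>)
  then show "\<And>t. t \<in> {0<..<b} \<Longrightarrow> (U has_vector_derivative inverse_riccati_field G1 G2 (R t) (U t)) (at t)"
    by auto
  have "continuous (at t within {0..b}) U" if "t \<in> {0..b}" for t
  proof (cases "t = 0")
    case True
    have "\<forall>\<^sub>F s in at_right 0. matrix_inv (W s) = U s"
      by (rule eventually_at_rightI[of 0 1]) (auto simp: U_def)
    then have "(U \<longlongrightarrow> U 0) (at_right 0)" using lim by (simp add: U_def Lim_transform_eventually)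
    then show ?thesis
      using True \<open>0 < b\<close> by (simp add: continuous_within at_within_Icc_at_right)
  next
    case False
    with that have "(U has_vector_derivative inverse_riccati_field G1 G2 (R t) (U t)) (at t)"
      by (intro U') auto
    then show ?thesis
      by (rule continuous_at_imp_continuous_at_within[OF has_vector_derivative_continuous])
  qed
  then show "continuous_on {0..b} U" using continuous_on_eq_continuous_within by blast
qed

lemma riccati_solutions_eq_near_0:
  fixes W1 W2 :: "real \<Rightarrow> real^'n^'n" and R :: "real \<Rightarrow> real^'n^'n"
  assumes R: "continuous_on {0..b} R"
    and W1': "\<And>t. t \<in> {0<..b} \<Longrightarrow> (W1 has_vector_derivative riccati_field G1 G2 (R t) (W1 t)) (at t)"
    and W2': "\<And>t. t \<in> {0<..b} \<Longrightarrow> (W2 has_vector_derivative riccati_field G1 G2 (R t) (W2 t)) (at t)"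
    and inv: "\<And>t. t \<in> {0<..b} \<Longrightarrow> invertible (W1 t) \<and> invertible (W2 t)"
    and lim: "((\<lambda>t. matrix_inv (W1 t)) \<longlongrightarrow> 0) (at_right 0)" "((\<lambda>t. matrix_inv (W2 t)) \<longlongrightarrow> 0) (at_right 0)"
    and t: "t \<in> {0<..b}"
  shows "W1 t = W2 t"
proof -
  let ?U = "\<lambda>W t. if t = 0 then 0 else matrix_inv (W t)"
  have "0 < b" using t by simp
  note U1 = matrix_inv_riccati_solution_extension[OF \<open>0 < b\<close> W1' conjunct1[OF inv] lim(1)]
  note U2 = matrix_inv_riccati_solution_extension[OF \<open>0 < b\<close> W2' conjunct2[OF inv] lim(2)]
  have "?U W1 t = ?U W2 t"
    by (rule ode_solutions_eq_locally_lipschitz[OF _ U1(1) U2(1) _ U1(2) U2(2)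
          inverse_riccati_field_locally_lipschitz[OF R]]) (use t in auto)
  then have "matrix_inv (W1 t) = matrix_inv (W2 t)" using t by simp
  then show ?thesis using inv[OF t] matrix_inv_matrix_inv by metis
qed

lemma ival_open: "open (ival T)"
proof (cases T)
  case (real r)
  then have "ival T = {0<..<r}" by (auto simp: ival_def)
  then show ?thesis by simp
next
  case PInf
  then have "ival T = {0<..}" by (auto simp: ival_def)
  then show ?thesis by simp
qed (simp add: ival_def)

lemma ival_downward_closed: "t \<in> ival T \<Longrightarrow> 0 < s \<Longrightarrow> s \<le> t \<Longrightarrow> s \<in> ival T"
  unfolding ival_def by (auto intro: le_less_trans[of "ereal s" "ereal t"])

lemma riccati_sol_continuous_on:
  assumes "riccati_sol G1 G2 R I W" "S \<subseteq> I"
  shows "continuous_on S W"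
  using assms unfolding riccati_sol_def
  by (blast intro: continuous_at_imp_continuous_on has_vector_derivative_continuous)

lemma riccati_solutions_eq:
  fixes W1 W2 :: "real \<Rightarrow> real^'n^'n" and R :: "real \<Rightarrow> real^'n^'n"
  assumes R: "continuous_on {0..} R"
    and W1: "riccati_sol G1 G2 R (ival T1) W1" "inv_to_zero W1"
    and W2: "riccati_sol G1 G2 R (ival T2) W2" "inv_to_zero W2"
    and t: "t \<in> ival T1" "t \<in> ival T2"
  shows "W1 t = W2 t"
proof -
  obtain \<delta>1 \<delta>2 where \<delta>: "0 < \<delta>1" "0 < \<delta>2"
    and inv: "\<And>s. 0 < s \<Longrightarrow> s < \<delta>1 \<Longrightarrow> invertible (W1 s)" "\<And>s. 0 < s \<Longrightarrow> s < \<delta>2 \<Longrightarrow> invertible (W2 s)"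
    and lim: "((\<lambda>s. matrix_inv (W1 s)) \<longlongrightarrow> 0) (at_right 0)" "((\<lambda>s. matrix_inv (W2 s)) \<longlongrightarrow> 0) (at_right 0)"
    using W1(2) W2(2) unfolding inv_to_zero_def by metis
  define b where "b = min t (min \<delta>1 \<delta>2 / 2)"
  have b: "0 < b" "b \<le> t" "b < \<delta>1" "b < \<delta>2" using \<delta> t by (auto simp: b_def ival_def)
  have sub: "s \<in> ival T1" "s \<in> ival T2" if "0 < s" "s \<le> t" for s
    using that t ival_downward_closed by blast+
  note W1' = W1(1)[unfolded riccati_sol_iff, rule_format] and W2' = W2(1)[unfolded riccati_sol_iff, rule_format]
  have "W1 b = W2 b"
  proof (rule riccati_solutions_eq_near_0)
    show "continuous_on {0..b} R" using R by (rule continuous_on_subset) auto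
    show "(W1 has_vector_derivative riccati_field G1 G2 (R s) (W1 s)) (at s)"
      and "(W2 has_vector_derivative riccati_field G1 G2 (R s) (W2 s)) (at s)"
      if "s \<in> {0<..b}" for s
      using that b sub W1' W2' by auto
  qed (use b inv lim in auto)
  show ?thesis
  proof (rule ode_solutions_eq_locally_lipschitz[where a = b and b = t and X = W1 and Y = W2
        and F = "\<lambda>s. riccati_field G1 G2 (R s)",
        OF \<open>b \<le> t\<close> _ _ \<open>W1 b = W2 b\<close> _ _ riccati_field_locally_lipschitz])
    show "continuous_on {b..t} W1" "continuous_on {b..t} W2"
      using b sub by (auto intro!: riccati_sol_continuous_on[OF W1(1)] riccati_sol_continuous_on[OF W2(1)])
  qed (use b sub W1' W2' in auto)
qed

lemma riccati_sol_glue: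
  fixes Sol :: "ereal \<Rightarrow> (real \<Rightarrow> real^'n^'n) \<Rightarrow> bool"
  assumes sol: "\<And>T W. Sol T W \<Longrightarrow> riccati_sol G1 G2 R (ival T) W"
    and agree: "\<And>T1 W1 T2 W2 t. Sol T1 W1 \<Longrightarrow> Sol T2 W2 \<Longrightarrow> t \<in> ival T1 \<Longrightarrow> t \<in> ival T2 \<Longrightarrow> W1 t = W2 t"
  obtains V where "riccati_sol G1 G2 R (ival (Sup {T. \<exists>W. Sol T W})) V"
    "\<And>T W t. Sol T W \<Longrightarrow> t \<in> ival T \<Longrightarrow> W t = V t"
proof -
  define V where "V t = (SOME y. \<exists>T W. Sol T W \<and> t \<in> ival T \<and> y = W t)" for t
  have VW: "W t = V t" if "Sol T W" "t \<in> ival T" for T W t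
  proof -
    have "\<exists>T' W'. Sol T' W' \<and> t \<in> ival T' \<and> V t = W' t"
      unfolding V_def by (rule someI_ex) (use that in blast)
    then show ?thesis using agree[OF that(1) _ that(2)] by metis
  qed
  have "riccati_sol G1 G2 R (ival (Sup {T. \<exists>W. Sol T W})) V"
    unfolding riccati_sol_iff
  proof
    fix t assume "t \<in> ival (Sup {T. \<exists>W. Sol T W})"
    then obtain T W where W: "Sol T W" and "ereal t < T" "0 < t"
      by (auto simp: ival_def less_Sup_iff)
    then have t: "t \<in> ival T" by (simp add: ival_def)
    have "(W has_vector_derivative riccati_field G1 G2 (R t) (W t)) (at t)"
      using sol[OF W] t by (simp add: riccati_sol_iff)
    then show "(V has_vector_derivative riccati_field G1 G2 (R t) (V t)) (at t)"
      unfolding VW[OF W t]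
      by (rule has_vector_derivative_transform_within_open[OF _ ival_open t]) (use VW W in auto)
  qed
  with VW show ?thesis using that by blast
qed

lemma inv_to_zero_cong:
  assumes "inv_to_zero V" "0 < \<delta>" "\<And>t. 0 < t \<Longrightarrow> t < \<delta> \<Longrightarrow> W t = V t"
  shows "inv_to_zero W"
proof -
  obtain \<delta>' where "0 < \<delta>'" "\<And>t. 0 < t \<Longrightarrow> t < \<delta>' \<Longrightarrow> invertible (V t)"
    and lim: "((\<lambda>t. matrix_inv (V t)) \<longlongrightarrow> 0) (at_right 0)"
    using assms(1) unfolding inv_to_zero_def by blast
  moreover have "\<forall>\<^sub>F t in at_right 0. matrix_inv (V t) = matrix_inv (W t)"
    by (rule eventually_at_rightI[OF _ \<open>0 < \<delta>\<close>]) (simp add: assms(3))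
  ultimately show ?thesis
    unfolding inv_to_zero_def using assms(2,3)
    by (intro conjI exI[of _ "min \<delta> \<delta>'"]) (auto intro: Lim_transform_eventually)
qed

theorem lemmaA4:
  fixes G1 :: "real^'n^'n" and B :: "real^'k^'n" and R :: "real \<Rightarrow> real^'n^'n"
  assumes "controllable (transpose G1) B"
    and "smooth_on_nonneg R"
    and "\<And>t. t \<ge> 0 \<Longrightarrow> symmetric_mat (R t)"
  shows "\<exists>T::ereal. T > 0 \<and> (\<exists>V.
           riccati_sol G1 (B ** transpose B) R (ival T) V \<and> inv_to_zero V \<and>
           (\<exists>\<delta>>0. \<forall>t. 0 < t \<and> t < \<delta> \<longrightarrow> pos_def (V t)) \<and>
           (\<forall>T' W. T' > 0 \<and> riccati_sol G1 (B ** transpose B) R (ival T') W \<and> inv_to_zero W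
              \<longrightarrow> T' \<le> T \<and> (\<forall>t\<in>ival T'. W t = V t)))"
proof -
  define Sol where "Sol T W \<longleftrightarrow> T > 0 \<and> riccati_sol G1 (B ** transpose B) R (ival T) W \<and> inv_to_zero W"
    for T W
  define T where "T = Sup {T. \<exists>W. Sol T W}"
  have R: "continuous_on {0..} R" by (rule smooth_on_nonneg_imp_continuous_on[OF assms(2)])
  obtain e V0 where e: "0 < e" and S0: "Sol (ereal e) V0" and pd: "\<And>t. 0 < t \<Longrightarrow> t < e \<Longrightarrow> pos_def (V0 t)"
    using riccati_solution_near_0[OF assms(1) R assms(3)] unfolding Sol_def by (metis ereal_less(2))
  have agree0: "W1 t = W2 t" if "Sol T1 W1" "Sol T2 W2" "t \<in> ival T1" "t \<in> ival T2" for T1 W1 T2 W2 t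
    using riccati_solutions_eq[OF R] that unfolding Sol_def by blast
  obtain V where V: "riccati_sol G1 (B ** transpose B) R (ival T) V"
    and agree: "\<And>T W t. Sol T W \<Longrightarrow> t \<in> ival T \<Longrightarrow> W t = V t"
  proof (rule riccati_sol_glue[of Sol])
    show "riccati_sol G1 (B ** transpose B) R (ival T) W" if "Sol T W" for T W
      using that by (simp add: Sol_def)
  qed (use agree0 that in \<open>simp_all add: T_def\<close>)
  have le_T: "Sol T' W \<Longrightarrow> T' \<le> T" for T' W by (auto simp: T_def intro: Sup_upper)
  have V0_V: "V0 t = V t" if "0 < t" "t < e" for t using agree[OF S0] that by (simp add: ival_def)
  show ?thesis
  proof (intro exI[of _ T] exI[of _ V] conjI allI impI)
    show "0 < T" using le_T[OF S0] e by (meson ereal_less(2) less_le_trans)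
    show "inv_to_zero V" using S0 e V0_V by (auto simp: Sol_def intro: inv_to_zero_cong)
    show "\<exists>\<delta>>0. \<forall>t. 0 < t \<and> t < \<delta> \<longrightarrow> pos_def (V t)" using e pd V0_V by force
  qed (use V le_T agree in \<open>auto simp: Sol_def\<close>)
qed

end
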